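(* Let $p\ge5$ be a prime, let $H$ be the group of upper unitriangular $5\times5$ matrices over $\mathbb{F}_p$, and let $t_{ij}=1+e_{ij}\in H$ for $i<j$ (with $e_{ij}$ the matrix unit). Let $G=\langle x,y\rangle\times H$, where $\langle x,y\rangle$ is elementary abelian of order $p^2$, let $K=\gamma_4(H)=\langle t_{15}\rangle$ and $A=\gamma_2(H)$. Then $K\le Z(G)$, $A/K$ is abelian (while $A$ is not), and the assignment $x\mapsto t_{13}K$, $y\mapsto t_{35}K$, $t_{ij}\mapsto K$ uniquely defines an endomorphism $\psi$ of $G/K$ with image in $A/K$. The endomorphism $\psi$ is not induced by any endomorphism of $G$. Moreover, there is no endomorphism $\phi$ of $G$ and no bilinear map $\alpha:G\times G\to K$ such that for all $g,h\in G$ $$g\cdot\psi^\uparrow(g)\cdot h\cdot\psi^\uparrow(g)^{-1}=g\cdot\phi(g)\cdot h\cdot\phi(g)^{-1}\cdot\alpha(g,h),$$ where $\psi^\uparrow:G\to A$ is any lifting of $\psi$ (i.e. $\psi^\uparrow(g)K=\psi(gK)$ for all $g$).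
   Context: $\gamma_k(H)$ denotes the $k$-th term of the lower central series ($\gamma_1(H)=H$, $\gamma_{k+1}(H)=[\gamma_k(H),H]$). A map $\alpha:G\times G\to K$ is bilinear if $\alpha(gh,k)=\alpha(g,k)\alpha(h,k)$ and $\alpha(g,hk)=\alpha(g,h)\alpha(g,k)$ for all $g,h,k\in G$. *)

theory Defs
  imports "HOL-Algebra.Algebra"
begin

primrec lcs_aux :: "('a, 'b) monoid_scheme \<Rightarrow> nat \<Rightarrow> 'a set" where
  "lcs_aux G 0 = carrier G"
| "lcs_aux G (Suc k) =
     generate G {a \<otimes>\<^bsub>G\<^esub> b \<otimes>\<^bsub>G\<^esub> inv\<^bsub>G\<^esub> a \<otimes>\<^bsub>G\<^esub> inv\<^bsub>G\<^esub> b
                 | a b. a \<in> lcs_aux G k \<and> b \<in> carrier G}"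

definition gamma :: "('a, 'b) monoid_scheme \<Rightarrow> nat \<Rightarrow> 'a set" where
  "gamma G k = lcs_aux G (k - 1)"

definition center_of :: "('a, 'b) monoid_scheme \<Rightarrow> 'a set" where
  "center_of G = {z \<in> carrier G. \<forall>g \<in> carrier G. z \<otimes>\<^bsub>G\<^esub> g = g \<otimes>\<^bsub>G\<^esub> z}"

text \<open>Matrices are functions nat => nat => int, indices 1..5, entries in {0..<p}
  (representing F_p), zero outside the index range.\<close>

definition unitri_carrier :: "nat \<Rightarrow> (nat \<Rightarrow> nat \<Rightarrow> int) set" where
  "unitri_carrier p = {M. (\<forall>i j. (i \<in> {1..5} \<and> j \<in> {1..5} \<longrightarrow> M i j \<in> {0..<int p})
        \<and> (i \<notin> {1..5} \<or> j \<notin> {1..5} \<longrightarrow> M i j = 0)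
        \<and> (i \<in> {1..5} \<longrightarrow> M i i = 1)
        \<and> (j < i \<longrightarrow> M i j = 0))}"

definition mat_mult_mod :: "nat \<Rightarrow> (nat \<Rightarrow> nat \<Rightarrow> int) \<Rightarrow> (nat \<Rightarrow> nat \<Rightarrow> int) \<Rightarrow> (nat \<Rightarrow> nat \<Rightarrow> int)" where
  "mat_mult_mod p M N = (\<lambda>i j. if i \<in> {1..5} \<and> j \<in> {1..5}
       then (\<Sum>k\<in>{1..5}. M i k * N k j) mod int p else 0)"

definition mat_one :: "nat \<Rightarrow> nat \<Rightarrow> int" where
  "mat_one = (\<lambda>i j. if i = j \<and> i \<in> {1..5} then 1 else 0)"

definition UT5 :: "nat \<Rightarrow> (nat \<Rightarrow> nat \<Rightarrow> int) monoid" where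
  "UT5 p = \<lparr>carrier = unitri_carrier p, monoid.mult = mat_mult_mod p, one = mat_one\<rparr>"

definition tmat :: "nat \<Rightarrow> nat \<Rightarrow> (nat \<Rightarrow> nat \<Rightarrow> int)" where
  "tmat i j = (\<lambda>a b. mat_one a b + (if a = i \<and> b = j then 1 else 0))"

definition Ggrp :: "nat \<Rightarrow> ((int \<times> int) \<times> (nat \<Rightarrow> nat \<Rightarrow> int)) monoid" where
  "Ggrp p = (integer_mod_group p \<times>\<times> integer_mod_group p) \<times>\<times> UT5 p"

definition embH :: "(nat \<Rightarrow> nat \<Rightarrow> int) \<Rightarrow> (int \<times> int) \<times> (nat \<Rightarrow> nat \<Rightarrow> int)" where
  "embH h = ((0, 0), h)"

definition xG :: "(int \<times> int) \<times> (nat \<Rightarrow> nat \<Rightarrow> int)" where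
  "xG = ((1, 0), mat_one)"

definition yG :: "(int \<times> int) \<times> (nat \<Rightarrow> nat \<Rightarrow> int)" where
  "yG = ((0, 1), mat_one)"

definition tG :: "nat \<Rightarrow> nat \<Rightarrow> (int \<times> int) \<times> (nat \<Rightarrow> nat \<Rightarrow> int)" where
  "tG i j = embH (tmat i j)"

definition Kgrp :: "nat \<Rightarrow> ((int \<times> int) \<times> (nat \<Rightarrow> nat \<Rightarrow> int)) set" where
  "Kgrp p = embH ` gamma (UT5 p) 4"

definition Agrp :: "nat \<Rightarrow> ((int \<times> int) \<times> (nat \<Rightarrow> nat \<Rightarrow> int)) set" where
  "Agrp p = embH ` gamma (UT5 p) 2"

definition bilinear_on :: "('a, 'b) monoid_scheme \<Rightarrow> 'a set \<Rightarrow> ('a \<Rightarrow> 'a \<Rightarrow> 'a) \<Rightarrow> bool" where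
  "bilinear_on G K \<alpha> \<longleftrightarrow>
     (\<forall>g \<in> carrier G. \<forall>h \<in> carrier G. \<alpha> g h \<in> K) \<and>
     (\<forall>g \<in> carrier G. \<forall>h \<in> carrier G. \<forall>k \<in> carrier G.
        \<alpha> (g \<otimes>\<^bsub>G\<^esub> h) k = \<alpha> g k \<otimes>\<^bsub>G\<^esub> \<alpha> h k \<and>
        \<alpha> g (h \<otimes>\<^bsub>G\<^esub> k) = \<alpha> g h \<otimes>\<^bsub>G\<^esub> \<alpha> g k)"

end

theory Submission
  imports Defs
begin

text \<open>
  Let \<open>H\<^sub>k\<close> be the set of matrices in \<open>H\<close> whose first \<open>k - 1\<close> superdiagonals vanish. The commutator
  of an element of \<open>H\<^sub>i\<close> with one of \<open>H\<^sub>j\<close> lies in \<open>H\<^bsub>i+j\<^esub>\<close>, so \<open>\<gamma>\<^sub>k(H) \<subseteq> H\<^sub>k\<close>; for \<open>k = 4\<close> equality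
  holds since \<open>t\<^sub>1\<^sub>5\<close> is an iterated commutator and \<open>H\<^sub>4 = \<langle>t\<^sub>1\<^sub>5\<rangle>\<close>. Thus \<open>K = H\<^sub>4\<close> is central and
  \<open>A \<subseteq> H\<^sub>2\<close> is abelian modulo \<open>K\<close>, whereas \<open>[t\<^sub>1\<^sub>3, t\<^sub>3\<^sub>5] = t\<^sub>1\<^sub>5 \<noteq> 1\<close>.

  The endomorphism is \<open>\<psi>(x\<^sup>a y\<^sup>b h K) = t\<^sub>1\<^sub>3\<^sup>a t\<^sub>3\<^sub>5\<^sup>b K\<close>; it is a homomorphism because \<open>t\<^sub>1\<^sub>3\<close> and
  \<open>t\<^sub>3\<^sub>5\<close> commute modulo \<open>K\<close>, and it is unique because \<open>x\<close>, \<open>y\<close> and the \<open>t\<^sub>i\<^sub>j\<close> generate \<open>G\<close>.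

  Both non-liftability statements come down to the same obstruction: there is no endomorphism
  \<open>\<phi>\<close> with \<open>\<phi>(x) \<in> t\<^sub>1\<^sub>3 H\<^sub>3\<close> and \<open>\<phi>(y) \<in> t\<^sub>3\<^sub>5 H\<^sub>3\<close>, because \<open>x\<close> and \<open>y\<close> commute while the
  \<open>(1,5)\<close>-entries of \<open>(t\<^sub>1\<^sub>3 c)(t\<^sub>3\<^sub>5 d)\<close> and \<open>(t\<^sub>3\<^sub>5 d)(t\<^sub>1\<^sub>3 c)\<close> differ by \<open>1\<close> for \<open>c, d \<in> H\<^sub>3\<close>. If \<open>\<phi>\<close>
  induces \<open>\<psi>\<close> this is immediate. In the twisted identity, \<open>\<psi>\<^sup>\<up>(g)\<close> and \<open>\<phi>(g)\<close> induce the same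
  conjugation on \<open>G\<close> up to the central factor \<open>\<alpha>(g, h)\<close>; writing \<open>\<phi>(x) = t\<^sub>1\<^sub>3 c\<close>, the element \<open>c\<close>
  then commutes with all of \<open>H\<close> modulo \<open>K\<close>, which forces \<open>c \<in> H\<^sub>3\<close> (and likewise for \<open>y\<close>).
\<close>

text \<open>Index \<open>1\<close> must stay a numeral for the entry lemmas below to apply.\<close>
declare One_nat_def [simp del]

lemma sum_atLeastAtMost_1_5: "(\<Sum>k\<in>{1..5::nat}. f k) = f 1 + f 2 + f 3 + f 4 + f 5"
proof -
  have "{1..5::nat} = {1,2,3,4,5}" by auto
  then show ?thesis by (simp add: add.assoc)
qed

lemma mod_add_eq_self_imp_zero:
  fixes c m y :: int
  assumes "0 \<le> c" and "c < m" and "(y + c) mod m = y mod m"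
  shows "c = 0"
proof (rule ccontr)
  assume "c \<noteq> 0"
  moreover have "m dvd c" using assms(3) by (simp add: mod_eq_dvd_iff)
  ultimately have "m \<le> c" using assms(1) zdvd_imp_le by simp
  then show False using assms(2) by simp
qed

lemma subgroup_nat_pow_closed: "subgroup K G \<Longrightarrow> x \<in> K \<Longrightarrow> x [^]\<^bsub>G\<^esub> (n::nat) \<in> K"
  by (induction n) (auto simp: subgroup.one_closed subgroup.m_closed)

lemma subgroup_equalizer:
  assumes "group G" and "group Q" and f1: "f1 \<in> hom G Q" and f2: "f2 \<in> hom G Q"
  shows "subgroup {g \<in> carrier G. f1 g = f2 g} G"
proof -
  interpret G: group G by fact
  have g1: "group_hom G Q f1" and g2: "group_hom G Q f2"
    using assms by (simp_all add: group_hom_def group_hom_axioms_def)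
  show ?thesis
  proof (rule G.subgroupI)
    show "{g \<in> carrier G. f1 g = f2 g} \<noteq> {}"
      using group_hom.hom_one[OF g1] group_hom.hom_one[OF g2] by auto
    show "inv\<^bsub>G\<^esub> a \<in> {g \<in> carrier G. f1 g = f2 g}" if "a \<in> {g \<in> carrier G. f1 g = f2 g}" for a
      using that group_hom.hom_inv[OF g1] group_hom.hom_inv[OF g2] by auto
    show "a \<otimes>\<^bsub>G\<^esub> b \<in> {g \<in> carrier G. f1 g = f2 g}"
      if "a \<in> {g \<in> carrier G. f1 g = f2 g}" and "b \<in> {g \<in> carrier G. f1 g = f2 g}" for a b
      using that hom_mult[OF f1] hom_mult[OF f2] by auto
  qed auto
qed

lemma (in group) conj_eq_twisted_conj_imp_commute:
  assumes t: "t \<in> carrier G" and c: "c \<in> carrier G" and h: "h \<in> carrier G"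
    and z: "z \<in> carrier G" and b: "b \<in> carrier G"
    and z_central: "\<And>x. x \<in> carrier G \<Longrightarrow> z \<otimes> x = x \<otimes> z"
    and b_central: "\<And>x. x \<in> carrier G \<Longrightarrow> b \<otimes> x = x \<otimes> b"
    and eq: "(z \<otimes> t) \<otimes> h \<otimes> inv (z \<otimes> t) = (t \<otimes> c) \<otimes> h \<otimes> inv (t \<otimes> c) \<otimes> b"
  shows "c \<otimes> h = inv b \<otimes> (h \<otimes> c)"
proof -
  have "(z \<otimes> t) \<otimes> h \<otimes> inv (z \<otimes> t) = z \<otimes> (t \<otimes> h \<otimes> inv t) \<otimes> inv z"
    using t h z by (simp add: inv_mult_group m_assoc)
  also have "\<dots> = t \<otimes> (h \<otimes> inv t)" using z_central t h z by (simp add: m_assoc)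
  finally have lhs: "(z \<otimes> t) \<otimes> h \<otimes> inv (z \<otimes> t) = t \<otimes> (h \<otimes> inv t)" .
  have "(t \<otimes> c) \<otimes> h \<otimes> inv (t \<otimes> c) \<otimes> b = t \<otimes> (c \<otimes> h \<otimes> inv c) \<otimes> (inv t \<otimes> b)"
    using t h c b by (simp add: inv_mult_group m_assoc)
  also have "inv t \<otimes> b = b \<otimes> inv t" using b_central t by simp
  finally have rhs: "(t \<otimes> c) \<otimes> h \<otimes> inv (t \<otimes> c) \<otimes> b = t \<otimes> ((c \<otimes> h \<otimes> inv c \<otimes> b) \<otimes> inv t)"
    using t h c b by (simp add: m_assoc)
  have "h = c \<otimes> h \<otimes> inv c \<otimes> b" using eq lhs rhs t h c b by simp
  then have "h \<otimes> c = (c \<otimes> h \<otimes> inv c \<otimes> b) \<otimes> c" by (rule arg_cong)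
  also have "\<dots> = c \<otimes> h \<otimes> inv c \<otimes> (b \<otimes> c)" using h c b by (simp add: m_assoc)
  also have "b \<otimes> c = c \<otimes> b" using b_central c by simp
  also have "c \<otimes> h \<otimes> inv c \<otimes> (c \<otimes> b) = c \<otimes> h \<otimes> b"
    using h c b by (simp add: m_assoc[symmetric], simp add: m_assoc)
  also have "\<dots> = b \<otimes> (c \<otimes> h)" using b_central h c b by simp
  finally show ?thesis using h c b by (simp add: m_assoc[symmetric])
qed

lemma (in group) rcos_eq_imp_mult:
  assumes "subgroup K G" and "g \<in> carrier G" and "K #> g = K #> t"
  shows "\<exists>k\<in>K. g = k \<otimes> t"
proof -
  have "g \<in> K #> g" using assms(2,1) by (rule rcos_self)
  then show ?thesis using assms(3) by (auto simp: r_coset_def)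
qed

lemma (in group) normal_if_central:
  assumes "subgroup N G" and "\<And>z g. z \<in> N \<Longrightarrow> g \<in> carrier G \<Longrightarrow> z \<otimes> g = g \<otimes> z"
  shows "N \<lhd> G"
proof (rule normalI[OF assms(1)], intro ballI)
  fix x assume "x \<in> carrier G"
  then show "N #> x = x <# N" unfolding r_coset_def l_coset_def using assms(2)[OF _ \<open>x \<in> carrier G\<close>] by auto
qed

section \<open>Arithmetic of unitriangular \<open>5 \<times> 5\<close> matrices modulo \<open>p\<close>\<close>

text \<open>Congruence modulo \<open>p\<close> as a separate constant: repeatedly applying \<open>mod_eq_strip\<close> rebuilds
  a term with every inner \<open>mod p\<close> removed, reducing identities between reduced entries to
  ring identities.\<close>

definition mod_eq :: "nat \<Rightarrow> int \<Rightarrow> int \<Rightarrow> bool" where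
  "mod_eq p a b \<longleftrightarrow> a mod int p = b mod int p"

lemma mod_eq_mod: "mod_eq p a b \<Longrightarrow> mod_eq p (a mod int p) b"
  by (simp add: mod_eq_def)

lemma mod_eq_add: "mod_eq p a b \<Longrightarrow> mod_eq p c d \<Longrightarrow> mod_eq p (a + c) (b + d)"
  unfolding mod_eq_def by (rule mod_add_cong)

lemma mod_eq_mult: "mod_eq p a b \<Longrightarrow> mod_eq p c d \<Longrightarrow> mod_eq p (a * c) (b * d)"
  unfolding mod_eq_def by (rule mod_mult_cong)

lemma mod_eq_diff: "mod_eq p a b \<Longrightarrow> mod_eq p c d \<Longrightarrow> mod_eq p (a - c) (b - d)"
  unfolding mod_eq_def by (rule mod_diff_cong)

lemma mod_eq_uminus: "mod_eq p a b \<Longrightarrow> mod_eq p (- a) (- b)"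
  unfolding mod_eq_def by (rule mod_minus_cong)

lemma mod_eq_refl: "mod_eq p a a"
  by (simp add: mod_eq_def)

lemmas mod_eq_strip = mod_eq_mod mod_eq_add mod_eq_mult mod_eq_diff mod_eq_uminus mod_eq_refl

lemma mod_eq_via: "mod_eq p a x \<Longrightarrow> mod_eq p b y \<Longrightarrow> x = y \<Longrightarrow> a mod int p = b mod int p"
  by (simp add: mod_eq_def)

lemma mod_eq_zero_via: "mod_eq p a x \<Longrightarrow> x = 0 \<Longrightarrow> a mod int p = 0"
  by (simp add: mod_eq_def)

text \<open>Kept separate from \<open>unitri_mat\<close> so that the simplifier does not expand the case distinction.\<close>

definition upper_entry ::
    "int \<Rightarrow> int \<Rightarrow> int \<Rightarrow> int \<Rightarrow> int \<Rightarrow> int \<Rightarrow> int \<Rightarrow> int \<Rightarrow> int \<Rightarrow> int \<Rightarrow> nat \<Rightarrow> nat \<Rightarrow> int" where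
  "upper_entry a12 a23 a34 a45 a13 a24 a35 a14 a25 a15 i j =
     (if i = 1 \<and> j = 2 then a12 else if i = 2 \<and> j = 3 then a23
      else if i = 3 \<and> j = 4 then a34 else if i = 4 \<and> j = 5 then a45
      else if i = 1 \<and> j = 3 then a13 else if i = 2 \<and> j = 4 then a24
      else if i = 3 \<and> j = 5 then a35 else if i = 1 \<and> j = 4 then a14
      else if i = 2 \<and> j = 5 then a25 else if i = 1 \<and> j = 5 then a15 else 0)"

definition unitri_mat ::
    "nat \<Rightarrow> int \<Rightarrow> int \<Rightarrow> int \<Rightarrow> int \<Rightarrow> int \<Rightarrow> int \<Rightarrow> int \<Rightarrow> int \<Rightarrow> int \<Rightarrow> int \<Rightarrow> nat \<Rightarrow> nat \<Rightarrow> int" where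
  "unitri_mat p a12 a23 a34 a45 a13 a24 a35 a14 a25 a15 = (\<lambda>i j.
     if i \<in> {1..5} \<and> j \<in> {1..5} then
       if i = j then 1
       else if i < j then upper_entry a12 a23 a34 a45 a13 a24 a35 a14 a25 a15 i j mod int p
       else 0
     else 0)"

definition upper_pairs :: "(nat \<times> nat) set" where
  "upper_pairs = {(1,2),(2,3),(3,4),(4,5),(1,3),(2,4),(3,5),(1,4),(2,5),(1,5)}"

lemma upper_pairs_iff: "(i,j) \<in> upper_pairs \<longleftrightarrow> 1 \<le> i \<and> i < j \<and> j \<le> 5"
proof
  assume "1 \<le> i \<and> i < j \<and> j \<le> 5"
  moreover have "i \<in> {1,2,3,4,5}" "j \<in> {1,2,3,4,5}" using calculation by auto
  ultimately show "(i,j) \<in> upper_pairs" by (auto simp: upper_pairs_def)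
qed (auto simp: upper_pairs_def)

locale unitri5 =
  fixes p :: nat
  assumes two_le_p: "2 \<le> p"
begin

lemma int_p_pos: "0 < int p"
  using two_le_p by simp

lemma one_mod_p: "1 mod int p = 1"
  using two_le_p by simp

lemma unitri_entry_bounds:
  "M \<in> unitri_carrier p \<Longrightarrow> 1 \<le> i \<Longrightarrow> i \<le> 5 \<Longrightarrow> 1 \<le> j \<Longrightarrow> j \<le> 5 \<Longrightarrow> 0 \<le> M i j \<and> M i j < int p"
  by (auto simp: unitri_carrier_def)

lemma unitri_below_diag: "M \<in> unitri_carrier p \<Longrightarrow> j < i \<Longrightarrow> M i j = 0"
  by (auto simp: unitri_carrier_def)

lemma unitri_diag: "M \<in> unitri_carrier p \<Longrightarrow> 1 \<le> i \<Longrightarrow> i \<le> 5 \<Longrightarrow> M i i = 1"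
  by (auto simp: unitri_carrier_def)

lemma unitri_outside: "M \<in> unitri_carrier p \<Longrightarrow> \<not> (i \<in> {1..5} \<and> j \<in> {1..5}) \<Longrightarrow> M i j = 0"
  by (auto simp: unitri_carrier_def)

lemma unitri_entry_mod:
  "M \<in> unitri_carrier p \<Longrightarrow> 1 \<le> i \<Longrightarrow> i \<le> 5 \<Longrightarrow> 1 \<le> j \<Longrightarrow> j \<le> 5 \<Longrightarrow> M i j mod int p = M i j"
  using unitri_entry_bounds[of M i j] by simp

lemma unitri_entry_zeroI:
  assumes "C \<in> unitri_carrier p" and "1 \<le> i" "i \<le> 5" "1 \<le> j" "j \<le> 5"
    and "(y + C i j) mod int p = y mod int p"
  shows "C i j = 0"
  using assms mod_add_eq_self_imp_zero unitri_entry_bounds by blast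

lemma mat_mult_mod_entries:
  assumes "M \<in> unitri_carrier p" and "N \<in> unitri_carrier p"
  shows "mat_mult_mod p M N 1 2 = (M 1 2 + N 1 2) mod p"
    and "mat_mult_mod p M N 2 3 = (M 2 3 + N 2 3) mod p"
    and "mat_mult_mod p M N 3 4 = (M 3 4 + N 3 4) mod p"
    and "mat_mult_mod p M N 4 5 = (M 4 5 + N 4 5) mod p"
    and "mat_mult_mod p M N 1 3 = (M 1 3 + N 1 3 + M 1 2 * N 2 3) mod p"
    and "mat_mult_mod p M N 2 4 = (M 2 4 + N 2 4 + M 2 3 * N 3 4) mod p"
    and "mat_mult_mod p M N 3 5 = (M 3 5 + N 3 5 + M 3 4 * N 4 5) mod p"
    and "mat_mult_mod p M N 1 4 = (M 1 4 + N 1 4 + M 1 2 * N 2 4 + M 1 3 * N 3 4) mod p"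
    and "mat_mult_mod p M N 2 5 = (M 2 5 + N 2 5 + M 2 3 * N 3 5 + M 2 4 * N 4 5) mod p"
    and "mat_mult_mod p M N 1 5 =
      (M 1 5 + N 1 5 + M 1 2 * N 2 5 + M 1 3 * N 3 5 + M 1 4 * N 4 5) mod p"
  using assms
  by (simp_all add: mat_mult_mod_def sum_atLeastAtMost_1_5 unitri_below_diag unitri_diag)
     (simp_all add: ac_simps)

lemma unitri_eqI:
  assumes M: "M \<in> unitri_carrier p" and N: "N \<in> unitri_carrier p"
    and "M 1 2 = N 1 2" "M 2 3 = N 2 3" "M 3 4 = N 3 4" "M 4 5 = N 4 5"
    "M 1 3 = N 1 3" "M 2 4 = N 2 4" "M 3 5 = N 3 5" "M 1 4 = N 1 4" "M 2 5 = N 2 5" "M 1 5 = N 1 5"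
  shows "M = N"
proof (intro ext)
  fix i j
  show "M i j = N i j"
  proof (cases "i \<in> {1..5} \<and> j \<in> {1..5}")
    case True
    then have i: "i = 1 \<or> i = 2 \<or> i = 3 \<or> i = 4 \<or> i = 5" and j: "j = 1 \<or> j = 2 \<or> j = 3 \<or> j = 4 \<or> j = 5"
      by auto
    show ?thesis
    proof (cases "j < i")
      case True
      then show ?thesis using unitri_below_diag[OF M] unitri_below_diag[OF N] by metis
    next
      case False
      show ?thesis using i j False
        by (elim disjE) (simp_all add: assms(3-12) unitri_diag[OF M] unitri_diag[OF N])
    qed
  next
    case False
    then show ?thesis using unitri_outside[OF M] unitri_outside[OF N] by metis
  qed
qed

lemma mat_mult_mod_closed:
  assumes M: "M \<in> unitri_carrier p" and N: "N \<in> unitri_carrier p"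
  shows "mat_mult_mod p M N \<in> unitri_carrier p"
proof -
  have diag: "mat_mult_mod p M N i i = 1" if "i \<in> {1..5}" for i
  proof -
    have "i = 1 \<or> i = 2 \<or> i = 3 \<or> i = 4 \<or> i = 5" using that by auto
    then show ?thesis using two_le_p
      by (elim disjE) (simp_all add: mat_mult_mod_def sum_atLeastAtMost_1_5 unitri_below_diag unitri_diag M N)
  qed
  have below: "mat_mult_mod p M N i j = 0" if "j < i" for i j
  proof -
    have "(\<Sum>k\<in>{1..5}. M i k * N k j) = 0"
    proof (rule sum.neutral, rule ballI)
      fix k
      show "M i k * N k j = 0"
        using that unitri_below_diag[OF M, of k i] unitri_below_diag[OF N, of j k]
        by (cases "k < i") auto
    qed
    then show ?thesis by (simp add: mat_mult_mod_def)
  qed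
  have range: "mat_mult_mod p M N i j \<in> {0..<int p}" if "i \<in> {1..5}" "j \<in> {1..5}" for i j
    using that int_p_pos by (simp add: mat_mult_mod_def)
  have outside: "mat_mult_mod p M N i j = 0" if "\<not> (i \<in> {1..5} \<and> j \<in> {1..5})" for i j
    unfolding mat_mult_mod_def by (rule if_not_P[OF that])
  show ?thesis unfolding unitri_carrier_def using diag below range outside by blast
qed

lemma unitri_mat_closed: "unitri_mat p a12 a23 a34 a45 a13 a24 a35 a14 a25 a15 \<in> unitri_carrier p"
  using int_p_pos two_le_p unfolding unitri_carrier_def unitri_mat_def by simp

lemma unitri_mat_entries:
  "unitri_mat p a12 a23 a34 a45 a13 a24 a35 a14 a25 a15 1 2 = a12 mod int p"
  "unitri_mat p a12 a23 a34 a45 a13 a24 a35 a14 a25 a15 2 3 = a23 mod int p"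
  "unitri_mat p a12 a23 a34 a45 a13 a24 a35 a14 a25 a15 3 4 = a34 mod int p"
  "unitri_mat p a12 a23 a34 a45 a13 a24 a35 a14 a25 a15 4 5 = a45 mod int p"
  "unitri_mat p a12 a23 a34 a45 a13 a24 a35 a14 a25 a15 1 3 = a13 mod int p"
  "unitri_mat p a12 a23 a34 a45 a13 a24 a35 a14 a25 a15 2 4 = a24 mod int p"
  "unitri_mat p a12 a23 a34 a45 a13 a24 a35 a14 a25 a15 3 5 = a35 mod int p"
  "unitri_mat p a12 a23 a34 a45 a13 a24 a35 a14 a25 a15 1 4 = a14 mod int p"
  "unitri_mat p a12 a23 a34 a45 a13 a24 a35 a14 a25 a15 2 5 = a25 mod int p"
  "unitri_mat p a12 a23 a34 a45 a13 a24 a35 a14 a25 a15 1 5 = a15 mod int p"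
  by (simp_all add: unitri_mat_def upper_entry_def)

lemma mat_one_eq_unitri_mat: "mat_one = unitri_mat p 0 0 0 0 0 0 0 0 0 0"
  unfolding mat_one_def unitri_mat_def upper_entry_def by (intro ext) simp

lemma mat_one_closed: "mat_one \<in> unitri_carrier p"
  using mat_one_eq_unitri_mat unitri_mat_closed by metis

lemma mat_one_entries:
  "mat_one 1 2 = 0" "mat_one 2 3 = 0" "mat_one 3 4 = 0" "mat_one 4 5 = 0" "mat_one 1 3 = 0"
  "mat_one 2 4 = 0" "mat_one 3 5 = 0" "mat_one 1 4 = 0" "mat_one 2 5 = 0" "mat_one 1 5 = 0"
  by (simp_all add: mat_one_def)

lemma mat_one_mult: "M \<in> unitri_carrier p \<Longrightarrow> mat_mult_mod p mat_one M = M"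
  by (rule unitri_eqI)
     (simp_all add: mat_mult_mod_closed mat_one_closed mat_mult_mod_entries mat_one_entries unitri_entry_mod)

lemma mat_mult_one: "M \<in> unitri_carrier p \<Longrightarrow> mat_mult_mod p M mat_one = M"
  by (rule unitri_eqI)
     (simp_all add: mat_mult_mod_closed mat_one_closed mat_mult_mod_entries mat_one_entries unitri_entry_mod)

lemma mat_mult_mod_assoc:
  assumes "M \<in> unitri_carrier p" and "N \<in> unitri_carrier p" and "P \<in> unitri_carrier p"
  shows "mat_mult_mod p (mat_mult_mod p M N) P = mat_mult_mod p M (mat_mult_mod p N P)"
  apply (rule unitri_eqI)
    apply (simp_all add: mat_mult_mod_closed assms mat_mult_mod_entries)
  apply (rule mod_eq_via, (rule mod_eq_strip)+, simp add: algebra_simps)+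
  done

text \<open>Inverse by back substitution along the superdiagonals.\<close>

definition unitri_inv :: "(nat \<Rightarrow> nat \<Rightarrow> int) \<Rightarrow> nat \<Rightarrow> nat \<Rightarrow> int" where
  "unitri_inv M = (let y12 = - M 1 2; y23 = - M 2 3; y34 = - M 3 4; y45 = - M 4 5;
     y13 = - (M 1 3 + y12 * M 2 3); y24 = - (M 2 4 + y23 * M 3 4); y35 = - (M 3 5 + y34 * M 4 5);
     y14 = - (M 1 4 + y12 * M 2 4 + y13 * M 3 4); y25 = - (M 2 5 + y23 * M 3 5 + y24 * M 4 5);
     y15 = - (M 1 5 + y12 * M 2 5 + y13 * M 3 5 + y14 * M 4 5)
     in unitri_mat p y12 y23 y34 y45 y13 y24 y35 y14 y25 y15)"

lemma unitri_inv_closed: "unitri_inv M \<in> unitri_carrier p"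
  unfolding unitri_inv_def Let_def by (rule unitri_mat_closed)

lemma unitri_inv_mult: "M \<in> unitri_carrier p \<Longrightarrow> mat_mult_mod p (unitri_inv M) M = mat_one"
  apply (rule unitri_eqI)
    apply (simp_all add: mat_mult_mod_closed unitri_inv_closed mat_one_closed mat_mult_mod_entries mat_one_entries)
  apply (simp_all add: unitri_inv_def Let_def unitri_mat_entries)
  apply (rule mod_eq_zero_via, (rule mod_eq_strip)+, simp add: algebra_simps)+
  done

lemma UT5_carrier: "carrier (UT5 p) = unitri_carrier p"
  and UT5_mult: "x \<otimes>\<^bsub>UT5 p\<^esub> y = mat_mult_mod p x y"
  and UT5_one: "\<one>\<^bsub>UT5 p\<^esub> = mat_one"
  by (simp_all add: UT5_def)

lemma group_UT5: "group (UT5 p)"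
proof -
  have "monoid (UT5 p)"
    by (rule monoidI)
       (auto simp: UT5_def mat_mult_mod_closed mat_one_closed mat_mult_mod_assoc mat_one_mult mat_mult_one)
  then show ?thesis
  proof (rule monoid.group_l_invI)
    fix x assume "x \<in> carrier (UT5 p)"
    then show "\<exists>y\<in>carrier (UT5 p). y \<otimes>\<^bsub>UT5 p\<^esub> x = \<one>\<^bsub>UT5 p\<^esub>"
      by (intro bexI[of _ "unitri_inv x"]) (auto simp: UT5_def unitri_inv_closed unitri_inv_mult)
  qed
qed

lemma UT5_inv: "M \<in> unitri_carrier p \<Longrightarrow> inv\<^bsub>UT5 p\<^esub> M = unitri_inv M"
  by (rule group.inv_equality[OF group_UT5]) (simp_all add: UT5_def unitri_inv_mult unitri_inv_closed)

section \<open>The filtration by superdiagonals\<close>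

definition in_level :: "nat \<Rightarrow> (nat \<Rightarrow> nat \<Rightarrow> int) \<Rightarrow> bool" where
  "in_level k M \<longleftrightarrow> (1 < k \<longrightarrow> M 1 2 = 0 \<and> M 2 3 = 0 \<and> M 3 4 = 0 \<and> M 4 5 = 0) \<and>
    (2 < k \<longrightarrow> M 1 3 = 0 \<and> M 2 4 = 0 \<and> M 3 5 = 0) \<and> (3 < k \<longrightarrow> M 1 4 = 0 \<and> M 2 5 = 0) \<and>
    (4 < k \<longrightarrow> M 1 5 = 0)"

definition agree_below :: "nat \<Rightarrow> (nat \<Rightarrow> nat \<Rightarrow> int) \<Rightarrow> (nat \<Rightarrow> nat \<Rightarrow> int) \<Rightarrow> bool" where
  "agree_below k U V \<longleftrightarrow>
    (1 < k \<longrightarrow> U 1 2 = V 1 2 \<and> U 2 3 = V 2 3 \<and> U 3 4 = V 3 4 \<and> U 4 5 = V 4 5) \<and>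
    (2 < k \<longrightarrow> U 1 3 = V 1 3 \<and> U 2 4 = V 2 4 \<and> U 3 5 = V 3 5) \<and>
    (3 < k \<longrightarrow> U 1 4 = V 1 4 \<and> U 2 5 = V 2 5) \<and> (4 < k \<longrightarrow> U 1 5 = V 1 5)"

definition level :: "nat \<Rightarrow> (nat \<Rightarrow> nat \<Rightarrow> int) set" where
  "level k = {M \<in> unitri_carrier p. in_level k M}"

lemma in_level_of_agree_below_mult:
  assumes Z: "Z \<in> unitri_carrier p" and Y: "Y \<in> unitri_carrier p"
    and agree: "agree_below k (mat_mult_mod p Z Y) Y"
  shows "in_level k Z"
proof -
  have zero: "Z i j = 0" if "1 \<le> i" "i \<le> 5" "1 \<le> j" "j \<le> 5" and "(Z i j + Y i j) mod int p = Y i j" for i j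
    using that unitri_entry_zeroI[OF Z, of i j "Y i j"] unitri_entry_mod[OF Y, of i j] by (simp add: add.commute)
  note A = agree[unfolded agree_below_def] and e = mat_mult_mod_entries[OF Z Y]
  have z12: "Z 1 2 = 0" if "1 < k" using zero[of 1 2] e(1) A that by simp
  have z23: "Z 2 3 = 0" if "1 < k" using zero[of 2 3] e(2) A that by simp
  have z34: "Z 3 4 = 0" if "1 < k" using zero[of 3 4] e(3) A that by simp
  have z45: "Z 4 5 = 0" if "1 < k" using zero[of 4 5] e(4) A that by simp
  have z13: "Z 1 3 = 0" if "2 < k" using zero[of 1 3] e(5) A that z12 by simp
  have z24: "Z 2 4 = 0" if "2 < k" using zero[of 2 4] e(6) A that z23 by simp
  have z35: "Z 3 5 = 0" if "2 < k" using zero[of 3 5] e(7) A that z34 by simp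
  have z14: "Z 1 4 = 0" if "3 < k" using zero[of 1 4] e(8) A that z12 z13 by simp
  have z25: "Z 2 5 = 0" if "3 < k" using zero[of 2 5] e(9) A that z23 z24 by simp
  have z15: "Z 1 5 = 0" if "4 < k" using zero[of 1 5] e(10) A that z12 z13 z14 by simp
  show ?thesis unfolding in_level_def using z12 z23 z34 z45 z13 z24 z35 z14 z25 z15 by simp
qed

lemma in_level_mult:
  "U \<in> unitri_carrier p \<Longrightarrow> V \<in> unitri_carrier p \<Longrightarrow> in_level k U \<Longrightarrow> in_level k V \<Longrightarrow>
    in_level k (mat_mult_mod p U V)"
  by (auto simp: in_level_def mat_mult_mod_entries)

lemma in_level_one: "in_level k mat_one"
  by (simp add: in_level_def mat_one_entries)

lemma in_level_inv: "U \<in> unitri_carrier p \<Longrightarrow> in_level k U \<Longrightarrow> in_level k (unitri_inv U)"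
  by (rule in_level_of_agree_below_mult[OF unitri_inv_closed])
     (auto simp: unitri_inv_mult agree_below_def in_level_def mat_one_entries)

lemma level_subgroup: "subgroup (level k) (UT5 p)"
proof (rule group.subgroupI[OF group_UT5])
  show "level k \<subseteq> carrier (UT5 p)" by (auto simp: level_def UT5_carrier)
  show "level k \<noteq> {}" using in_level_one mat_one_closed by (auto simp: level_def)
  show "inv\<^bsub>UT5 p\<^esub> a \<in> level k" if "a \<in> level k" for a
    using that by (auto simp: level_def UT5_inv in_level_inv unitri_inv_closed)
  show "a \<otimes>\<^bsub>UT5 p\<^esub> b \<in> level k" if "a \<in> level k" "b \<in> level k" for a b
    using that by (auto simp: level_def UT5_mult in_level_mult mat_mult_mod_closed)
qed

lemma in_level_commute_agree_below:
  assumes M: "M \<in> unitri_carrier p" and N: "N \<in> unitri_carrier p" and "in_level k M"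
  shows "agree_below (Suc k) (mat_mult_mod p M N) (mat_mult_mod p N M)"
  using assms(3)
  by (auto simp: agree_below_def in_level_def mat_mult_mod_entries[OF M N] mat_mult_mod_entries[OF N M]
      algebra_simps)

lemma level2_commute_agree_below:
  assumes M: "M \<in> level 2" and N: "N \<in> level 2"
  shows "agree_below 4 (mat_mult_mod p M N) (mat_mult_mod p N M)"
proof -
  have "M \<in> unitri_carrier p" "N \<in> unitri_carrier p" "in_level 2 M" "in_level 2 N"
    using assms by (simp_all add: level_def)
  then show ?thesis
    by (simp add: agree_below_def in_level_def mat_mult_mod_entries algebra_simps)
qed

lemma agree_below_5_eq:
  "U \<in> unitri_carrier p \<Longrightarrow> V \<in> unitri_carrier p \<Longrightarrow> agree_below 5 U V \<Longrightarrow> U = V"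
  by (rule unitri_eqI) (auto simp: agree_below_def)

lemma level4_commute:
  assumes "M \<in> level 4" and N: "N \<in> unitri_carrier p"
  shows "mat_mult_mod p M N = mat_mult_mod p N M"
proof -
  have M: "M \<in> unitri_carrier p" and "in_level 4 M" using assms(1) by (auto simp: level_def)
  then have "agree_below 5 (mat_mult_mod p M N) (mat_mult_mod p N M)"
    using in_level_commute_agree_below[OF M N] by (simp add: numeral_eq_Suc)
  then show ?thesis by (intro agree_below_5_eq mat_mult_mod_closed M N)
qed

abbreviation commutator :: "(nat \<Rightarrow> nat \<Rightarrow> int) \<Rightarrow> (nat \<Rightarrow> nat \<Rightarrow> int) \<Rightarrow> nat \<Rightarrow> nat \<Rightarrow> int" where
  "commutator a b \<equiv> a \<otimes>\<^bsub>UT5 p\<^esub> b \<otimes>\<^bsub>UT5 p\<^esub> inv\<^bsub>UT5 p\<^esub> a \<otimes>\<^bsub>UT5 p\<^esub> inv\<^bsub>UT5 p\<^esub> b"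

lemma commutator_in_level:
  assumes a: "a \<in> unitri_carrier p" and b: "b \<in> unitri_carrier p" and "in_level k a"
  shows "in_level (Suc k) (commutator a b)"
proof -
  interpret H: group "UT5 p" by (rule group_UT5)
  have a': "a \<in> carrier (UT5 p)" and b': "b \<in> carrier (UT5 p)" using a b by (simp_all add: UT5_carrier)
  have "commutator a b \<in> carrier (UT5 p)" using a' b' by simp
  then have c: "commutator a b \<in> unitri_carrier p" by (simp add: UT5_carrier)
  have "inv\<^bsub>UT5 p\<^esub> b \<otimes>\<^bsub>UT5 p\<^esub> (b \<otimes>\<^bsub>UT5 p\<^esub> a) = a"
    using a' b' by (simp add: H.m_assoc[symmetric])
  then have "commutator a b \<otimes>\<^bsub>UT5 p\<^esub> (b \<otimes>\<^bsub>UT5 p\<^esub> a) = a \<otimes>\<^bsub>UT5 p\<^esub> b"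
    using a' b' by (simp add: H.m_assoc)
  then have "mat_mult_mod p (commutator a b) (mat_mult_mod p b a) = mat_mult_mod p a b"
    by (simp only: UT5_mult)
  moreover have "agree_below (Suc k) (mat_mult_mod p a b) (mat_mult_mod p b a)"
    using in_level_commute_agree_below[OF a b \<open>in_level k a\<close>] .
  ultimately show ?thesis
    using in_level_of_agree_below_mult[OF c mat_mult_mod_closed[OF b a]] by simp
qed

lemma lcs_aux_subset_carrier: "lcs_aux (UT5 p) m \<subseteq> carrier (UT5 p)"
proof (induction m)
  case (Suc m)
  interpret H: group "UT5 p" by (rule group_UT5)
  show ?case using Suc by (auto intro!: H.generate_incl)
qed simp

lemma lcs_aux_subgroup: "subgroup (lcs_aux (UT5 p) m) (UT5 p)"
proof -
  interpret H: group "UT5 p" by (rule group_UT5)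
  show ?thesis
  proof (cases m)
    case 0
    then show ?thesis using H.subgroup_self by simp
  next
    case (Suc k)
    then show ?thesis using lcs_aux_subset_carrier[of k] by (auto intro!: H.generate_is_subgroup)
  qed
qed

lemma lcs_aux_subset_level: "lcs_aux (UT5 p) m \<subseteq> level (Suc m)"
proof (induction m)
  case 0
  then show ?case by (auto simp: level_def in_level_def UT5_carrier)
next
  case (Suc m)
  interpret H: group "UT5 p" by (rule group_UT5)
  have "commutator a b \<in> level (Suc (Suc m))"
    if "a \<in> lcs_aux (UT5 p) m" and "b \<in> carrier (UT5 p)" for a b
  proof -
    have a: "a \<in> unitri_carrier p" and "in_level (Suc m) a"
      using that Suc by (auto simp: level_def)
    moreover have b: "b \<in> unitri_carrier p" using that by (simp add: UT5_carrier)
    moreover have "commutator a b \<in> carrier (UT5 p)"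
      using that lcs_aux_subset_carrier by blast
    ultimately show ?thesis using commutator_in_level by (simp add: level_def UT5_carrier)
  qed
  then show ?case by (auto intro!: H.generate_subgroup_incl[OF _ level_subgroup])
qed

lemma gamma_subset_level: "1 \<le> k \<Longrightarrow> gamma (UT5 p) k \<subseteq> level k"
  using lcs_aux_subset_level[of "k - 1"] by (simp add: gamma_def)

section \<open>Elementary matrices and the lower central series\<close>

definition elementary :: "nat \<Rightarrow> nat \<Rightarrow> int \<Rightarrow> nat \<Rightarrow> nat \<Rightarrow> int" where
  "elementary i j c = unitri_mat p (if i = 1 \<and> j = 2 then c else 0) (if i = 2 \<and> j = 3 then c else 0)
     (if i = 3 \<and> j = 4 then c else 0) (if i = 4 \<and> j = 5 then c else 0)
     (if i = 1 \<and> j = 3 then c else 0) (if i = 2 \<and> j = 4 then c else 0)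
     (if i = 3 \<and> j = 5 then c else 0) (if i = 1 \<and> j = 4 then c else 0)
     (if i = 2 \<and> j = 5 then c else 0) (if i = 1 \<and> j = 5 then c else 0)"

lemma elementary_closed: "elementary i j c \<in> unitri_carrier p"
  by (simp add: elementary_def unitri_mat_closed)

lemma elementary_entries:
  "elementary i j c 1 2 = (if i = 1 \<and> j = 2 then c else 0) mod int p"
  "elementary i j c 2 3 = (if i = 2 \<and> j = 3 then c else 0) mod int p"
  "elementary i j c 3 4 = (if i = 3 \<and> j = 4 then c else 0) mod int p"
  "elementary i j c 4 5 = (if i = 4 \<and> j = 5 then c else 0) mod int p"
  "elementary i j c 1 3 = (if i = 1 \<and> j = 3 then c else 0) mod int p"
  "elementary i j c 2 4 = (if i = 2 \<and> j = 4 then c else 0) mod int p"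
  "elementary i j c 3 5 = (if i = 3 \<and> j = 5 then c else 0) mod int p"
  "elementary i j c 1 4 = (if i = 1 \<and> j = 4 then c else 0) mod int p"
  "elementary i j c 2 5 = (if i = 2 \<and> j = 5 then c else 0) mod int p"
  "elementary i j c 1 5 = (if i = 1 \<and> j = 5 then c else 0) mod int p"
  by (simp_all add: elementary_def unitri_mat_entries)

lemma elementary_zero: "elementary i j 0 = mat_one"
  by (simp add: elementary_def mat_one_eq_unitri_mat)

lemma tmat_closed:
  assumes "(i,j) \<in> upper_pairs"
  shows "tmat i j \<in> unitri_carrier p"
proof -
  have ij: "1 \<le> i" "i < j" "j \<le> 5" using assms by (auto simp: upper_pairs_iff)
  then have "tmat i j a b \<in> {0..<int p}" if "a \<in> {1..5}" "b \<in> {1..5}" for a b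
    using two_le_p by (simp add: tmat_def mat_one_def)
  moreover have "tmat i j a b = 0" if "\<not> (a \<in> {1..5} \<and> b \<in> {1..5})" for a b
    using ij that by (auto simp: tmat_def mat_one_def)
  moreover have "tmat i j a a = 1" if "a \<in> {1..5}" for a
    using ij that by (auto simp: tmat_def mat_one_def)
  moreover have "tmat i j a b = 0" if "b < a" for a b
    using ij that by (auto simp: tmat_def mat_one_def)
  ultimately show ?thesis unfolding unitri_carrier_def by blast
qed

lemma tmat_eq_elementary: "(i,j) \<in> upper_pairs \<Longrightarrow> tmat i j = elementary i j 1"
  by (rule unitri_eqI[OF tmat_closed elementary_closed])
     (simp_all add: tmat_def mat_one_def elementary_entries one_mod_p)

lemma unitri_mat_mult:
  "mat_mult_mod p (unitri_mat p a12 a23 a34 a45 a13 a24 a35 a14 a25 a15)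
      (unitri_mat p b12 b23 b34 b45 b13 b24 b35 b14 b25 b15)
    = unitri_mat p (a12 + b12) (a23 + b23) (a34 + b34) (a45 + b45)
      (a13 + b13 + a12 * b23) (a24 + b24 + a23 * b34) (a35 + b35 + a34 * b45)
      (a14 + b14 + a12 * b24 + a13 * b34) (a25 + b25 + a23 * b35 + a24 * b45)
      (a15 + b15 + a12 * b25 + a13 * b35 + a14 * b45)"
  apply (rule unitri_eqI)
    apply (simp_all add: mat_mult_mod_entries unitri_mat_closed mat_mult_mod_closed unitri_mat_entries)
  apply (rule mod_eq_via, (rule mod_eq_strip)+, simp)+
  done

lemma elementary_mult:
  assumes "(i,j) \<in> upper_pairs"
  shows "mat_mult_mod p (elementary i j c) (elementary i j d) = elementary i j (c + d)"
  using assms unfolding upper_pairs_def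
  by (elim insertE emptyE) (simp_all add: elementary_def unitri_mat_mult)

lemma elementary_mod: "elementary i j (c mod int p) = elementary i j c"
  by (rule unitri_eqI[OF elementary_closed elementary_closed]) (simp_all add: elementary_entries)

lemma tmat_nat_pow:
  assumes "(i,j) \<in> upper_pairs"
  shows "tmat i j [^]\<^bsub>UT5 p\<^esub> n = elementary i j (int n)"
proof (induction n)
  case 0
  then show ?case by (simp add: UT5_one elementary_zero)
next
  case (Suc n)
  then show ?case
    by (simp add: UT5_mult tmat_eq_elementary[OF assms] elementary_mult[OF assms] add.commute)
qed

lemma elementary_eq_tmat_pow:
  assumes "(i,j) \<in> upper_pairs"
  shows "elementary i j c = tmat i j [^]\<^bsub>UT5 p\<^esub> nat (c mod int p)"
  using int_p_pos by (simp add: tmat_nat_pow[OF assms] elementary_mod)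

lemma elementary_inv:
  "(i,j) \<in> upper_pairs \<Longrightarrow> inv\<^bsub>UT5 p\<^esub> (elementary i j c) = elementary i j (- c)"
  by (rule group.inv_equality[OF group_UT5])
     (simp_all add: UT5_mult UT5_carrier UT5_one elementary_mult elementary_zero elementary_closed)

lemma commutator_tmat:
  "commutator (tmat 1 2) (tmat 2 3) = tmat 1 3"
  "commutator (tmat 3 4) (tmat 4 5) = tmat 3 5"
  "commutator (tmat 1 3) (tmat 3 4) = tmat 1 4"
  "commutator (tmat 1 4) (tmat 4 5) = tmat 1 5"
  by (simp_all add: tmat_eq_elementary upper_pairs_def elementary_inv UT5_mult)
     (simp_all add: elementary_def unitri_mat_mult)

lemma gamma_one: "gamma (UT5 p) 1 = unitri_carrier p"
  by (simp add: gamma_def UT5_carrier)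

lemma gamma_subgroup: "subgroup (gamma (UT5 p) k) (UT5 p)"
  by (simp add: gamma_def lcs_aux_subgroup)

lemma commutator_in_gamma:
  "1 \<le> k \<Longrightarrow> a \<in> gamma (UT5 p) k \<Longrightarrow> b \<in> unitri_carrier p \<Longrightarrow> commutator a b \<in> gamma (UT5 p) (k + 1)"
  by (cases k) (auto simp: gamma_def UT5_carrier Suc_eq_plus1[symmetric] intro!: generate.incl)

lemma tmat_in_gamma:
  "tmat 1 3 \<in> gamma (UT5 p) 2" "tmat 3 5 \<in> gamma (UT5 p) 2" "tmat 1 5 \<in> gamma (UT5 p) 2"
  "tmat 1 5 \<in> gamma (UT5 p) 4"
proof -
  have t: "tmat i j \<in> unitri_carrier p" if "(i,j) \<in> upper_pairs" for i j
    using that by (rule tmat_closed)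
  have c1: "commutator a b \<in> gamma (UT5 p) 2" if "a \<in> unitri_carrier p" "b \<in> unitri_carrier p" for a b
    using commutator_in_gamma[of 1 a b] that by (simp add: gamma_one)
  show "tmat 1 3 \<in> gamma (UT5 p) 2"
    using c1[of "tmat 1 2" "tmat 2 3"] commutator_tmat(1) t by (simp add: upper_pairs_def)
  show "tmat 3 5 \<in> gamma (UT5 p) 2"
    using c1[of "tmat 3 4" "tmat 4 5"] commutator_tmat(2) t by (simp add: upper_pairs_def)
  show "tmat 1 5 \<in> gamma (UT5 p) 2"
    using c1[of "tmat 1 4" "tmat 4 5"] commutator_tmat(4) t by (simp add: upper_pairs_def)
  have "tmat 1 4 \<in> gamma (UT5 p) 3"
    using commutator_in_gamma[OF _ \<open>tmat 1 3 \<in> gamma (UT5 p) 2\<close>, of "tmat 3 4"] commutator_tmat(3) t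
    by (simp add: upper_pairs_def)
  then show "tmat 1 5 \<in> gamma (UT5 p) 4"
    using commutator_in_gamma[of 3 "tmat 1 4" "tmat 4 5"] commutator_tmat(4) t
    by (simp add: upper_pairs_def)
qed

lemma level4_eq_elementary: "M \<in> level 4 \<Longrightarrow> M = elementary 1 5 (M 1 5)"
  by (rule unitri_eqI) (auto simp: level_def in_level_def elementary_closed elementary_entries unitri_entry_mod)

lemma level4_subset_generate: "level 4 \<subseteq> generate (UT5 p) {tmat 1 5}"
proof
  fix M assume M: "M \<in> level 4"
  interpret H: group "UT5 p" by (rule group_UT5)
  have "M = tmat 1 5 [^]\<^bsub>UT5 p\<^esub> nat (M 1 5 mod int p)"
    using level4_eq_elementary[OF M] elementary_eq_tmat_pow[of 1 5] by (simp add: upper_pairs_def)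
  also have "\<dots> \<in> generate (UT5 p) {tmat 1 5}"
    by (intro subgroup_nat_pow_closed[OF H.generate_is_subgroup] generate.incl)
       (auto simp: UT5_carrier tmat_closed upper_pairs_def)
  finally show "M \<in> generate (UT5 p) {tmat 1 5}" .
qed

lemma gamma4_eq_generate: "gamma (UT5 p) 4 = generate (UT5 p) {tmat 1 5}"
  and level4_eq_generate: "level 4 = generate (UT5 p) {tmat 1 5}"
proof -
  interpret H: group "UT5 p" by (rule group_UT5)
  have "generate (UT5 p) {tmat 1 5} \<subseteq> gamma (UT5 p) 4"
    using H.generate_subgroup_incl[OF _ gamma_subgroup] tmat_in_gamma(4) by blast
  then show "gamma (UT5 p) 4 = generate (UT5 p) {tmat 1 5}" "level 4 = generate (UT5 p) {tmat 1 5}"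
    using gamma_subset_level[of 4] level4_subset_generate by auto
qed

lemma level4_subset_gamma2: "level 4 \<subseteq> gamma (UT5 p) 2"
proof -
  interpret H: group "UT5 p" by (rule group_UT5)
  show ?thesis
    unfolding level4_eq_generate using H.generate_subgroup_incl[OF _ gamma_subgroup] tmat_in_gamma(3) by blast
qed

lemma level_subset_of_agree_below:
  assumes T: "subgroup T (UT5 p)" and "level k' \<subseteq> T" and "k' = Suc k"
    and in_T: "\<And>M. M \<in> level k \<Longrightarrow> V M \<in> T"
    and agree: "\<And>M. M \<in> level k \<Longrightarrow> agree_below k' M (V M)"
  shows "level k \<subseteq> T"
proof
  fix M assume "M \<in> level k"
  then have M: "M \<in> unitri_carrier p" and "V M \<in> T" and "agree_below k' M (V M)"
    using in_T agree by (auto simp: level_def)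
  then have V: "V M \<in> unitri_carrier p" using subgroup.subset[OF T] by (auto simp: UT5_carrier)
  let ?z = "mat_mult_mod p M (unitri_inv (V M))"
  have z: "?z \<in> unitri_carrier p" by (simp add: mat_mult_mod_closed M unitri_inv_closed)
  have zV: "mat_mult_mod p ?z (V M) = M"
    by (simp add: mat_mult_mod_assoc M unitri_inv_closed V unitri_inv_mult mat_mult_one)
  then have "in_level k' ?z" using in_level_of_agree_below_mult[OF z V] \<open>agree_below k' M (V M)\<close> by simp
  then have "?z \<in> T" using z \<open>level k' \<subseteq> T\<close> by (auto simp: level_def)
  then have "mat_mult_mod p ?z (V M) \<in> T" using subgroup.m_closed[OF T _ \<open>V M \<in> T\<close>] by (simp add: UT5_mult)
  then show "M \<in> T" using zV by simp
qed

lemma unitri_carrier_subset_generate_tmat: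
  "unitri_carrier p \<subseteq> generate (UT5 p) ((\<lambda>(i, j). tmat i j) ` upper_pairs)"
proof -
  interpret H: group "UT5 p" by (rule group_UT5)
  let ?T = "generate (UT5 p) ((\<lambda>(i, j). tmat i j) ` upper_pairs)"
  have T: "subgroup ?T (UT5 p)"
    by (rule H.generate_is_subgroup) (auto simp: UT5_carrier tmat_closed)
  have e: "elementary i j c \<in> ?T" if "(i, j) \<in> upper_pairs" for i j c
    unfolding elementary_eq_tmat_pow[OF that]
    by (rule subgroup_nat_pow_closed[OF T generate.incl]) (use that in auto)
  have m: "mat_mult_mod p U V \<in> ?T" if "U \<in> ?T" "V \<in> ?T" for U V
    using subgroup.m_closed[OF T that] by (simp add: UT5_mult)
  note step = level_subset_of_agree_below[OF T]
  note entries = agree_below_def in_level_def elementary_def unitri_mat_mult unitri_mat_entries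
    unitri_entry_mod level_def
  have "level 4 \<subseteq> ?T"
    unfolding level4_eq_generate by (rule H.mono_generate) (force simp: upper_pairs_def)
  \<comment> \<open>Going down the filtration, match the next superdiagonal by a product of elementary matrices.\<close>
  then have "level 3 \<subseteq> ?T"
  proof (rule step[where V = "\<lambda>M. mat_mult_mod p (elementary 1 4 (M 1 4)) (elementary 2 5 (M 2 5))"])
    fix M assume "M \<in> level 3"
    then show "agree_below 4 M (mat_mult_mod p (elementary 1 4 (M 1 4)) (elementary 2 5 (M 2 5)))"
      by (simp add: entries)
  qed (auto simp: upper_pairs_iff intro!: m e)
  then have "level 2 \<subseteq> ?T"
  proof (rule step[where V = "\<lambda>M. mat_mult_mod p (mat_mult_mod p (elementary 1 3 (M 1 3))
      (elementary 2 4 (M 2 4))) (elementary 3 5 (M 3 5))"])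
    fix M assume "M \<in> level 2"
    then show "agree_below 3 M (mat_mult_mod p (mat_mult_mod p (elementary 1 3 (M 1 3))
      (elementary 2 4 (M 2 4))) (elementary 3 5 (M 3 5)))"
      by (simp add: entries)
  qed (auto simp: upper_pairs_iff intro!: m e)
  then have "level 1 \<subseteq> ?T"
  proof (rule step[where V = "\<lambda>M. mat_mult_mod p (mat_mult_mod p (mat_mult_mod p (elementary 1 2 (M 1 2))
      (elementary 2 3 (M 2 3))) (elementary 3 4 (M 3 4))) (elementary 4 5 (M 4 5))"])
    fix M assume "M \<in> level 1"
    then show "agree_below 2 M (mat_mult_mod p (mat_mult_mod p (mat_mult_mod p (elementary 1 2 (M 1 2))
      (elementary 2 3 (M 2 3))) (elementary 3 4 (M 3 4))) (elementary 4 5 (M 4 5)))"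
      by (simp add: entries)
  qed (auto simp: upper_pairs_iff intro!: m e)
  then show ?thesis by (simp add: level_def in_level_def)
qed

lemma level3_eq_unitri_mat: "M \<in> level 3 \<Longrightarrow> M = unitri_mat p 0 0 0 0 0 0 0 (M 1 4) (M 2 5) (M 1 5)"
  by (rule unitri_eqI) (auto simp: level_def in_level_def unitri_mat_closed unitri_mat_entries unitri_entry_mod)

lemma tmat13_tmat35_not_commute_mod_level3:
  assumes C: "C \<in> level 3" and D: "D \<in> level 3"
  shows "mat_mult_mod p (mat_mult_mod p (tmat 1 3) C) (mat_mult_mod p (tmat 3 5) D)
      \<noteq> mat_mult_mod p (mat_mult_mod p (tmat 3 5) D) (mat_mult_mod p (tmat 1 3) C)"
proof
  assume commute: "mat_mult_mod p (mat_mult_mod p (tmat 1 3) C) (mat_mult_mod p (tmat 3 5) D)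
      = mat_mult_mod p (mat_mult_mod p (tmat 3 5) D) (mat_mult_mod p (tmat 1 3) C)"
  obtain c14 c25 c15 where C': "C = unitri_mat p 0 0 0 0 0 0 0 c14 c25 c15"
    using level3_eq_unitri_mat[OF C] by blast
  obtain d14 d25 d15 where D': "D = unitri_mat p 0 0 0 0 0 0 0 d14 d25 d15"
    using level3_eq_unitri_mat[OF D] by blast
  have "(c15 + d15 + 1) mod int p = (d15 + c15) mod int p"
    using fun_cong[OF fun_cong[OF commute, of 1], of 5]
    by (simp add: C' D' tmat_eq_elementary upper_pairs_def elementary_def unitri_mat_mult unitri_mat_entries)
  then have "int p dvd 1" by (simp add: mod_eq_dvd_iff)
  then show False using two_le_p by simp
qed

section \<open>The group \<open>G\<close> and its subgroups \<open>K\<close> and \<open>A\<close>\<close>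

lemma group_G: "group (Ggrp p)"
  unfolding Ggrp_def by (intro DirProd_group group_integer_mod_group group_UT5)

lemma G_carrier: "carrier (Ggrp p) = ({0..<int p} \<times> {0..<int p}) \<times> unitri_carrier p"
  using two_le_p by (simp add: Ggrp_def carrier_integer_mod_group UT5_carrier)

lemma G_mult:
  "g \<otimes>\<^bsub>Ggrp p\<^esub> h = (((fst (fst g) + fst (fst h)) mod int p, (snd (fst g) + snd (fst h)) mod int p),
     mat_mult_mod p (snd g) (snd h))"
  by (cases g, cases h) (auto simp: Ggrp_def UT5_mult)

lemma G_one: "\<one>\<^bsub>Ggrp p\<^esub> = ((0, 0), mat_one)"
  by (simp add: Ggrp_def UT5_one)

lemma embH_closed: "M \<in> unitri_carrier p \<Longrightarrow> embH M \<in> carrier (Ggrp p)"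
  using two_le_p by (simp add: embH_def G_carrier)

lemma embH_mult: "embH M \<otimes>\<^bsub>Ggrp p\<^esub> embH N = embH (mat_mult_mod p M N)"
  by (simp add: embH_def G_mult)

lemma embH_hom: "embH \<in> hom (UT5 p) (Ggrp p)"
  by (auto simp: hom_def UT5_carrier embH_closed UT5_mult embH_mult)

lemma xG_closed: "xG \<in> carrier (Ggrp p)" and yG_closed: "yG \<in> carrier (Ggrp p)"
  using two_le_p mat_one_closed by (simp_all add: xG_def yG_def G_carrier)

lemma tG_closed: "(i,j) \<in> upper_pairs \<Longrightarrow> tG i j \<in> carrier (Ggrp p)"
  by (simp add: tG_def embH_closed tmat_closed)

lemma Kgrp_eq: "Kgrp p = {(0,0)} \<times> level 4"
  by (auto simp: Kgrp_def gamma4_eq_generate level4_eq_generate embH_def)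

lemma Agrp_eq: "Agrp p = {(0,0)} \<times> gamma (UT5 p) 2"
  by (auto simp: Agrp_def embH_def)

lemma Kgrp_subgroup: "subgroup (Kgrp p) (Ggrp p)"
  and Agrp_subgroup: "subgroup (Agrp p) (Ggrp p)"
proof -
  have Z: "group (integer_mod_group p \<times>\<times> integer_mod_group p)"
    by (intro DirProd_group group_integer_mod_group)
  have "subgroup {(0,0)} (integer_mod_group p \<times>\<times> integer_mod_group p)"
    using group.triv_subgroup[OF Z] by simp
  note sub = DirProd_subgroups[OF Z this group_UT5]
  show "subgroup (Kgrp p) (Ggrp p)" unfolding Kgrp_eq Ggrp_def by (rule sub[OF level_subgroup])
  show "subgroup (Agrp p) (Ggrp p)" unfolding Agrp_eq Ggrp_def by (rule sub[OF gamma_subgroup])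
qed

lemma Kgrp_subset_Agrp: "Kgrp p \<subseteq> Agrp p"
  using level4_subset_gamma2 by (auto simp: Kgrp_eq Agrp_eq)

lemma Kgrp_central: "z \<in> Kgrp p \<Longrightarrow> g \<in> carrier (Ggrp p) \<Longrightarrow> z \<otimes>\<^bsub>Ggrp p\<^esub> g = g \<otimes>\<^bsub>Ggrp p\<^esub> z"
  by (auto simp: Kgrp_eq G_carrier G_mult intro: level4_commute)

lemma Kgrp_subset_center: "Kgrp p \<subseteq> center_of (Ggrp p)"
  using Kgrp_central subgroup.subset[OF Kgrp_subgroup] by (fastforce simp: center_of_def)

lemma Kgrp_normal: "Kgrp p \<lhd> Ggrp p"
  using group.normal_if_central[OF group_G Kgrp_subgroup] Kgrp_central by blast

lemma rcos_embH_eq_of_agree_below: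
  assumes U: "U \<in> unitri_carrier p" and V: "V \<in> unitri_carrier p" and "agree_below 4 U V"
  shows "Kgrp p #>\<^bsub>Ggrp p\<^esub> embH U = Kgrp p #>\<^bsub>Ggrp p\<^esub> embH V"
proof -
  interpret G: group "Ggrp p" by (rule group_G)
  let ?z = "mat_mult_mod p U (unitri_inv V)"
  have z: "?z \<in> unitri_carrier p" by (simp add: mat_mult_mod_closed U unitri_inv_closed)
  have zV: "mat_mult_mod p ?z V = U"
    by (simp add: mat_mult_mod_assoc U unitri_inv_closed V unitri_inv_mult mat_mult_one)
  then have "in_level 4 ?z" using in_level_of_agree_below_mult[OF z V] assms(3) by simp
  then have "embH ?z \<in> Kgrp p" using z by (simp add: Kgrp_eq embH_def level_def)
  then have "embH ?z \<otimes>\<^bsub>Ggrp p\<^esub> embH V \<in> Kgrp p #>\<^bsub>Ggrp p\<^esub> embH V"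
    by (rule G.rcosI) (simp_all add: subgroup.subset[OF Kgrp_subgroup] embH_closed V)
  then have "embH U \<in> Kgrp p #>\<^bsub>Ggrp p\<^esub> embH V" using zV by (simp add: embH_mult)
  then show ?thesis using G.repr_independence[OF _ embH_closed[OF V] Kgrp_subgroup] by simp
qed

lemma comm_group_Agrp_Mod_Kgrp: "comm_group ((Ggrp p\<lparr>carrier := Agrp p\<rparr>) Mod Kgrp p)"
proof -
  let ?A = "Ggrp p\<lparr>carrier := Agrp p\<rparr>"
  interpret G: group "Ggrp p" by (rule group_G)
  have A: "group ?A" by (rule subgroup.subgroup_is_group[OF Agrp_subgroup group_G])
  have K: "subgroup (Kgrp p) ?A" by (rule G.subgroup_incl[OF Kgrp_subgroup Agrp_subgroup Kgrp_subset_Agrp])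
  have "Kgrp p \<lhd> ?A"
  proof (rule group.normal_if_central[OF A K])
    fix z g assume z: "z \<in> Kgrp p" and "g \<in> carrier ?A"
    then have "g \<in> carrier (Ggrp p)" using subgroup.subset[OF Agrp_subgroup] by auto
    then show "z \<otimes>\<^bsub>?A\<^esub> g = g \<otimes>\<^bsub>?A\<^esub> z" using Kgrp_central[OF z] by simp
  qed
  then interpret N: normal "Kgrp p" ?A .
  have swap: "Kgrp p #>\<^bsub>?A\<^esub> (a \<otimes>\<^bsub>?A\<^esub> b) = Kgrp p #>\<^bsub>?A\<^esub> (b \<otimes>\<^bsub>?A\<^esub> a)"
    if aA: "a \<in> Agrp p" and bA: "b \<in> Agrp p" for a b
  proof -
    obtain M where a: "a = embH M" and M: "M \<in> level 2"
      using aA gamma_subset_level[of 2] by (auto simp: Agrp_eq embH_def)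
    obtain N where b: "b = embH N" and N: "N \<in> level 2"
      using bA gamma_subset_level[of 2] by (auto simp: Agrp_eq embH_def)
    have "M \<in> unitri_carrier p" "N \<in> unitri_carrier p" using M N by (simp_all add: level_def)
    then show ?thesis
      using rcos_embH_eq_of_agree_below[OF mat_mult_mod_closed mat_mult_mod_closed level2_commute_agree_below[OF M N]]
      by (simp add: a b embH_mult r_coset_def)
  qed
  show ?thesis
  proof (rule group.group_comm_groupI[OF N.factorgroup_is_group])
    fix Q1 Q2 assume "Q1 \<in> carrier (?A Mod Kgrp p)" and "Q2 \<in> carrier (?A Mod Kgrp p)"
    then obtain a b where "a \<in> Agrp p" "Q1 = Kgrp p #>\<^bsub>?A\<^esub> a" "b \<in> Agrp p" "Q2 = Kgrp p #>\<^bsub>?A\<^esub> b"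
      by (auto simp: FactGroup_def RCOSETS_def)
    then show "Q1 \<otimes>\<^bsub>?A Mod Kgrp p\<^esub> Q2 = Q2 \<otimes>\<^bsub>?A Mod Kgrp p\<^esub> Q1"
      using N.rcos_sum swap by simp
  qed
qed

lemma not_comm_group_Agrp: "\<not> comm_group (Ggrp p\<lparr>carrier := Agrp p\<rparr>)"
proof
  assume "comm_group (Ggrp p\<lparr>carrier := Agrp p\<rparr>)"
  moreover have "tG 1 3 \<in> Agrp p" "tG 3 5 \<in> Agrp p"
    using tmat_in_gamma by (simp_all add: Agrp_eq tG_def embH_def)
  ultimately have "tG 1 3 \<otimes>\<^bsub>Ggrp p\<^esub> tG 3 5 = tG 3 5 \<otimes>\<^bsub>Ggrp p\<^esub> tG 1 3"
    using comm_monoid.m_comm[OF comm_group.axioms(1)] by fastforce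
  then have "mat_mult_mod p (tmat 1 3) (tmat 3 5) = mat_mult_mod p (tmat 3 5) (tmat 1 3)"
    by (simp add: tG_def embH_mult, simp add: embH_def)
  moreover have "mat_one \<in> level 3" by (simp add: level_def mat_one_closed in_level_one)
  ultimately show False
    using tmat13_tmat35_not_commute_mod_level3[of mat_one mat_one] tmat_closed[of 1 3] tmat_closed[of 3 5]
    by (simp add: upper_pairs_def mat_mult_one)
qed

section \<open>The endomorphism \<open>\<psi>\<close>\<close>

text \<open>All elements of a coset of \<open>K\<close> have the same \<open>\<langle>x, y\<rangle>\<close>-component.\<close>

definition xy_part :: "((int \<times> int) \<times> (nat \<Rightarrow> nat \<Rightarrow> int)) set \<Rightarrow> int \<times> int" where
  "xy_part Q = fst (SOME g. g \<in> Q)"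

definition psi_mat :: "int \<Rightarrow> int \<Rightarrow> nat \<Rightarrow> nat \<Rightarrow> int" where
  "psi_mat a b = mat_mult_mod p (elementary 1 3 a) (elementary 3 5 b)"

definition psi :: "((int \<times> int) \<times> (nat \<Rightarrow> nat \<Rightarrow> int)) set \<Rightarrow> ((int \<times> int) \<times> (nat \<Rightarrow> nat \<Rightarrow> int)) set" where
  "psi Q = (if Q \<in> carrier (Ggrp p Mod Kgrp p)
     then Kgrp p #>\<^bsub>Ggrp p\<^esub> embH (case_prod psi_mat (xy_part Q)) else undefined)"

lemma xy_part_rcos:
  assumes g: "g \<in> carrier (Ggrp p)"
  shows "xy_part (Kgrp p #>\<^bsub>Ggrp p\<^esub> g) = fst g"
proof -
  have "g \<in> Kgrp p #>\<^bsub>Ggrp p\<^esub> g" by (rule group.rcos_self[OF group_G g Kgrp_subgroup])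
  then have "(SOME g'. g' \<in> Kgrp p #>\<^bsub>Ggrp p\<^esub> g) \<in> Kgrp p #>\<^bsub>Ggrp p\<^esub> g" by (rule someI)
  then obtain k where "k \<in> Kgrp p" and "(SOME g'. g' \<in> Kgrp p #>\<^bsub>Ggrp p\<^esub> g) = k \<otimes>\<^bsub>Ggrp p\<^esub> g"
    by (auto simp: r_coset_def)
  then show ?thesis using g by (auto simp: xy_part_def Kgrp_eq G_carrier G_mult)
qed

lemma psi_rcos:
  "g \<in> carrier (Ggrp p) \<Longrightarrow>
    psi (Kgrp p #>\<^bsub>Ggrp p\<^esub> g) = Kgrp p #>\<^bsub>Ggrp p\<^esub> embH (psi_mat (fst (fst g)) (snd (fst g)))"
  by (simp add: psi_def xy_part_rcos carrier_FactGroup case_prod_beta)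

lemma psi_mat_closed: "psi_mat a b \<in> unitri_carrier p"
  by (simp add: psi_mat_def mat_mult_mod_closed elementary_closed)

lemma psi_mat_mod: "psi_mat (a mod int p) (b mod int p) = psi_mat a b"
  by (simp add: psi_mat_def elementary_mod)

lemma psi_mat_mult_agree_below:
  "agree_below 4 (psi_mat (a1 + a2) (b1 + b2)) (mat_mult_mod p (psi_mat a1 b1) (psi_mat a2 b2))"
  by (simp add: psi_mat_def elementary_def unitri_mat_mult agree_below_def unitri_mat_entries)

lemma psi_mat_in_gamma2: "psi_mat a b \<in> gamma (UT5 p) 2"
proof -
  have "elementary i j c \<in> gamma (UT5 p) 2" if "tmat i j \<in> gamma (UT5 p) 2" "(i, j) \<in> upper_pairs" for i j c
    using subgroup_nat_pow_closed[OF gamma_subgroup that(1)] elementary_eq_tmat_pow[OF that(2)] by simp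
  then show ?thesis
    using subgroup.m_closed[OF gamma_subgroup] tmat_in_gamma by (simp add: psi_mat_def upper_pairs_def UT5_mult)
qed

lemma psi_hom: "psi \<in> hom (Ggrp p Mod Kgrp p) (Ggrp p Mod Kgrp p)"
proof (rule homI)
  interpret N: normal "Kgrp p" "Ggrp p" by (rule Kgrp_normal)
  fix Q assume "Q \<in> carrier (Ggrp p Mod Kgrp p)"
  then show "psi Q \<in> carrier (Ggrp p Mod Kgrp p)"
    by (auto simp: psi_rcos carrier_FactGroup embH_closed psi_mat_closed)
next
  interpret N: normal "Kgrp p" "Ggrp p" by (rule Kgrp_normal)
  fix Q1 Q2 assume "Q1 \<in> carrier (Ggrp p Mod Kgrp p)" "Q2 \<in> carrier (Ggrp p Mod Kgrp p)"
  then obtain a1 b1 M1 a2 b2 M2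
    where g: "((a1, b1), M1) \<in> carrier (Ggrp p)" "Q1 = Kgrp p #>\<^bsub>Ggrp p\<^esub> ((a1, b1), M1)"
      and h: "((a2, b2), M2) \<in> carrier (Ggrp p)" "Q2 = Kgrp p #>\<^bsub>Ggrp p\<^esub> ((a2, b2), M2)"
    by (auto simp: carrier_FactGroup)
  have "psi (Q1 \<otimes>\<^bsub>Ggrp p Mod Kgrp p\<^esub> Q2) = psi (Kgrp p #>\<^bsub>Ggrp p\<^esub> (((a1, b1), M1) \<otimes>\<^bsub>Ggrp p\<^esub> ((a2, b2), M2)))"
    using g h by (simp add: N.rcos_sum)
  also have "\<dots> = Kgrp p #>\<^bsub>Ggrp p\<^esub> embH (psi_mat (a1 + a2) (b1 + b2))"
    using psi_rcos[OF N.m_closed[OF g(1) h(1)]] by (simp add: G_mult psi_mat_mod)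
  also have "\<dots> = Kgrp p #>\<^bsub>Ggrp p\<^esub> embH (mat_mult_mod p (psi_mat a1 b1) (psi_mat a2 b2))"
    by (rule rcos_embH_eq_of_agree_below[OF psi_mat_closed mat_mult_mod_closed[OF psi_mat_closed psi_mat_closed]
          psi_mat_mult_agree_below])
  also have "\<dots> = psi Q1 \<otimes>\<^bsub>Ggrp p Mod Kgrp p\<^esub> psi Q2"
    using g h by (simp add: psi_rcos N.rcos_sum embH_closed psi_mat_closed embH_mult)
  finally show "psi (Q1 \<otimes>\<^bsub>Ggrp p Mod Kgrp p\<^esub> Q2) = psi Q1 \<otimes>\<^bsub>Ggrp p Mod Kgrp p\<^esub> psi Q2" .
qed

lemma psi_extensional: "psi \<in> extensional (carrier (Ggrp p Mod Kgrp p))"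
  by (simp add: psi_def extensional_def)

lemma psi_xG: "psi (Kgrp p #>\<^bsub>Ggrp p\<^esub> xG) = Kgrp p #>\<^bsub>Ggrp p\<^esub> tG 1 3"
  and psi_yG: "psi (Kgrp p #>\<^bsub>Ggrp p\<^esub> yG) = Kgrp p #>\<^bsub>Ggrp p\<^esub> tG 3 5"
  using xG_closed yG_closed
  by (simp_all add: psi_rcos xG_def yG_def psi_mat_def elementary_zero mat_mult_one mat_one_mult
      elementary_closed tG_def tmat_eq_elementary upper_pairs_def)

lemma psi_tG: "(i, j) \<in> upper_pairs \<Longrightarrow> psi (Kgrp p #>\<^bsub>Ggrp p\<^esub> tG i j) = Kgrp p"
  using tG_closed group.coset_mult_one[OF group_G subgroup.subset[OF Kgrp_subgroup]]
  by (simp add: psi_rcos tG_def embH_def psi_mat_def elementary_zero mat_one_mult mat_one_closed G_one)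

lemma psi_image_subset:
  "psi ` carrier (Ggrp p Mod Kgrp p) \<subseteq> {Kgrp p #>\<^bsub>Ggrp p\<^esub> a | a. a \<in> Agrp p}"
proof
  fix Q assume "Q \<in> psi ` carrier (Ggrp p Mod Kgrp p)"
  then obtain g where "g \<in> carrier (Ggrp p)" and "Q = psi (Kgrp p #>\<^bsub>Ggrp p\<^esub> g)"
    by (auto simp: carrier_FactGroup)
  then have "Q = Kgrp p #>\<^bsub>Ggrp p\<^esub> embH (psi_mat (fst (fst g)) (snd (fst g)))"
    by (simp add: psi_rcos)
  moreover have "embH (psi_mat (fst (fst g)) (snd (fst g))) \<in> Agrp p"
    using psi_mat_in_gamma2 by (simp add: Agrp_def)
  ultimately show "Q \<in> {Kgrp p #>\<^bsub>Ggrp p\<^esub> a | a. a \<in> Agrp p}" by blast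
qed

lemma xG_pow: "xG [^]\<^bsub>Ggrp p\<^esub> (n::nat) = ((int n mod int p, 0), mat_one)"
  and yG_pow: "yG [^]\<^bsub>Ggrp p\<^esub> (n::nat) = ((0, int n mod int p), mat_one)"
  by (induction n) (simp_all add: G_one xG_def yG_def G_mult mat_one_mult mat_one_closed mod_simps add.commute)

lemma G_decompose:
  assumes "g \<in> carrier (Ggrp p)"
  shows "g = xG [^]\<^bsub>Ggrp p\<^esub> nat (fst (fst g)) \<otimes>\<^bsub>Ggrp p\<^esub> yG [^]\<^bsub>Ggrp p\<^esub> nat (snd (fst g))
    \<otimes>\<^bsub>Ggrp p\<^esub> embH (snd g)"
  using assms by (auto simp: G_carrier xG_pow yG_pow embH_def G_mult mat_one_mult mat_one_closed)

lemma carrier_G_subset_generate: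
  "carrier (Ggrp p) \<subseteq> generate (Ggrp p) (insert xG (insert yG ((\<lambda>(i, j). tG i j) ` upper_pairs)))"
    (is "_ \<subseteq> generate _ ?gens")
proof
  fix g assume g: "g \<in> carrier (Ggrp p)"
  interpret G: group "Ggrp p" by (rule group_G)
  interpret embH: group_hom "UT5 p" "Ggrp p" embH
    by (simp add: group_hom_def group_hom_axioms_def group_UT5 group_G embH_hom)
  have S: "subgroup (generate (Ggrp p) ?gens) (Ggrp p)"
    by (rule G.generate_is_subgroup) (auto simp: xG_closed yG_closed tG_closed)
  have "embH (snd g) \<in> embH ` generate (UT5 p) ((\<lambda>(i, j). tmat i j) ` upper_pairs)"
    using g unitri_carrier_subset_generate_tmat by (auto simp: G_carrier)
  also have "\<dots> = generate (Ggrp p) (embH ` (\<lambda>(i, j). tmat i j) ` upper_pairs)"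
    by (rule embH.generate_img[symmetric]) (auto simp: UT5_carrier tmat_closed)
  also have "\<dots> \<subseteq> generate (Ggrp p) ?gens"
    by (rule G.mono_generate) (auto simp: tG_def)
  finally have h: "embH (snd g) \<in> generate (Ggrp p) ?gens" .
  have xy: "xG \<in> generate (Ggrp p) ?gens" "yG \<in> generate (Ggrp p) ?gens"
    by (auto intro: generate.incl)
  show "g \<in> generate (Ggrp p) ?gens"
    by (subst G_decompose[OF g]) (intro subgroup.m_closed[OF S] subgroup_nat_pow_closed[OF S] h xy)
qed

lemma psi_unique:
  assumes hom: "\<phi> \<in> hom (Ggrp p Mod Kgrp p) (Ggrp p Mod Kgrp p)"
    and ext: "\<phi> \<in> extensional (carrier (Ggrp p Mod Kgrp p))"
    and x: "\<phi> (Kgrp p #>\<^bsub>Ggrp p\<^esub> xG) = Kgrp p #>\<^bsub>Ggrp p\<^esub> tG 1 3"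
    and y: "\<phi> (Kgrp p #>\<^bsub>Ggrp p\<^esub> yG) = Kgrp p #>\<^bsub>Ggrp p\<^esub> tG 3 5"
    and t: "\<And>i j. (i, j) \<in> upper_pairs \<Longrightarrow> \<phi> (Kgrp p #>\<^bsub>Ggrp p\<^esub> tG i j) = Kgrp p"
  shows "\<phi> = psi"
proof (rule extensionalityI[OF ext psi_extensional])
  interpret G: group "Ggrp p" by (rule group_G)
  interpret N: normal "Kgrp p" "Ggrp p" by (rule Kgrp_normal)
  let ?W = "{g \<in> carrier (Ggrp p). \<phi> (Kgrp p #>\<^bsub>Ggrp p\<^esub> g) = psi (Kgrp p #>\<^bsub>Ggrp p\<^esub> g)}"
  have "subgroup ?W (Ggrp p)"
    using subgroup_equalizer[OF group_G N.factorgroup_is_group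
        hom_compose[OF N.r_coset_hom_Mod hom] hom_compose[OF N.r_coset_hom_Mod psi_hom]]
    by simp
  moreover have "insert xG (insert yG ((\<lambda>(i, j). tG i j) ` upper_pairs)) \<subseteq> ?W"
    using x y t psi_xG psi_yG psi_tG xG_closed yG_closed tG_closed by auto
  ultimately have "carrier (Ggrp p) \<subseteq> ?W"
    using carrier_G_subset_generate G.generate_subgroup_incl by blast
  then show "\<phi> Q = psi Q" if "Q \<in> carrier (Ggrp p Mod Kgrp p)" for Q
    using that by (auto simp: carrier_FactGroup)
qed

section \<open>\<open>\<psi>\<close> does not lift\<close>

lemma level3_of_commute_mod_level4:
  assumes C: "C \<in> unitri_carrier p"
    and comm: "\<And>M. M \<in> unitri_carrier p \<Longrightarrow> \<exists>B\<in>level 4. mat_mult_mod p C M = mat_mult_mod p B (mat_mult_mod p M C)"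
  shows "C \<in> level 3"
proof -
  have agree: "agree_below 4 (mat_mult_mod p C M) (mat_mult_mod p M C)" if M: "M \<in> unitri_carrier p" for M
  proof -
    obtain B where "B \<in> level 4" and "mat_mult_mod p C M = mat_mult_mod p B (mat_mult_mod p M C)"
      using comm[OF M] by blast
    then show ?thesis
      using mat_mult_mod_closed[OF M C]
      by (auto simp: level_def in_level_def agree_below_def mat_mult_mod_entries unitri_entry_mod)
  qed
  note e12 = agree[OF elementary_closed[of 1 2 1], unfolded agree_below_def]
    and e23 = agree[OF elementary_closed[of 2 3 1], unfolded agree_below_def]
    and e34 = agree[OF elementary_closed[of 3 4 1], unfolded agree_below_def]
    and e45 = agree[OF elementary_closed[of 4 5 1], unfolded agree_below_def]
  note entries = mat_mult_mod_entries[OF C elementary_closed] mat_mult_mod_entries[OF elementary_closed C]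
    elementary_entries one_mod_p
  note zeroI = unitri_entry_zeroI[OF C]
  have "C 2 3 = 0" by (rule zeroI[of 2 3 "C 1 3"]) (use e12 in \<open>simp_all add: entries\<close>)
  moreover have "C 2 4 = 0" by (rule zeroI[of 2 4 "C 1 4"]) (use e12 in \<open>simp_all add: entries\<close>)
  moreover have "C 1 2 = 0" by (rule zeroI[of 1 2 "C 1 3"]) (use e23 in \<open>simp_all add: entries\<close>)
  moreover have "C 3 5 = 0" by (rule zeroI[of 3 5 "C 2 5"]) (use e23 in \<open>simp_all add: entries\<close>)
  moreover have "C 1 3 = 0" by (rule zeroI[of 1 3 "C 1 4"]) (use e34 in \<open>simp_all add: entries\<close>)
  moreover have "C 4 5 = 0" by (rule zeroI[of 4 5 "C 3 5"]) (use e34 in \<open>simp_all add: entries\<close>)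
  moreover have "C 3 4 = 0" by (rule zeroI[of 3 4 "C 3 5"]) (use e45 in \<open>simp_all add: entries\<close>)
  ultimately show ?thesis using C by (simp add: level_def in_level_def)
qed

lemma no_hom_mapping_to_t13_t35_mod_level3:
  assumes \<phi>: "\<phi> \<in> hom (Ggrp p) (Ggrp p)" and C: "C \<in> level 3" and D: "D \<in> level 3"
    and x: "snd (\<phi> xG) = mat_mult_mod p (tmat 1 3) C" and y: "snd (\<phi> yG) = mat_mult_mod p (tmat 3 5) D"
  shows False
proof -
  have "xG \<otimes>\<^bsub>Ggrp p\<^esub> yG = yG \<otimes>\<^bsub>Ggrp p\<^esub> xG"
    by (simp add: xG_def yG_def G_mult add.commute)
  then have "\<phi> xG \<otimes>\<^bsub>Ggrp p\<^esub> \<phi> yG = \<phi> yG \<otimes>\<^bsub>Ggrp p\<^esub> \<phi> xG"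
    using hom_mult[OF \<phi> xG_closed yG_closed] hom_mult[OF \<phi> yG_closed xG_closed] by simp
  then have "snd (\<phi> xG \<otimes>\<^bsub>Ggrp p\<^esub> \<phi> yG) = snd (\<phi> yG \<otimes>\<^bsub>Ggrp p\<^esub> \<phi> xG)" by simp
  then show False using tmat13_tmat35_not_commute_mod_level3[OF C D] by (simp add: G_mult x y)
qed

lemma psi_not_induced:
  "\<not> (\<exists>\<phi> \<in> hom (Ggrp p) (Ggrp p). \<forall>g \<in> carrier (Ggrp p).
      psi (Kgrp p #>\<^bsub>Ggrp p\<^esub> g) = Kgrp p #>\<^bsub>Ggrp p\<^esub> \<phi> g)"
proof
  assume "\<exists>\<phi> \<in> hom (Ggrp p) (Ggrp p). \<forall>g \<in> carrier (Ggrp p). psi (Kgrp p #>\<^bsub>Ggrp p\<^esub> g) = Kgrp p #>\<^bsub>Ggrp p\<^esub> \<phi> g"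
  then obtain \<phi> where \<phi>: "\<phi> \<in> hom (Ggrp p) (Ggrp p)"
    and lift: "\<And>g. g \<in> carrier (Ggrp p) \<Longrightarrow> psi (Kgrp p #>\<^bsub>Ggrp p\<^esub> g) = Kgrp p #>\<^bsub>Ggrp p\<^esub> \<phi> g"
    by blast
  interpret G: group "Ggrp p" by (rule group_G)
  have factor: "\<exists>C \<in> level 4. snd (\<phi> g) = mat_mult_mod p (tmat i j) C"
    if "g \<in> carrier (Ggrp p)" and "(i, j) \<in> upper_pairs"
      and "psi (Kgrp p #>\<^bsub>Ggrp p\<^esub> g) = Kgrp p #>\<^bsub>Ggrp p\<^esub> tG i j" for g i j
  proof -
    have "Kgrp p #>\<^bsub>Ggrp p\<^esub> \<phi> g = Kgrp p #>\<^bsub>Ggrp p\<^esub> tG i j" using that lift by simp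
    then obtain k where "k \<in> Kgrp p" and "\<phi> g = k \<otimes>\<^bsub>Ggrp p\<^esub> tG i j"
      using G.rcos_eq_imp_mult[OF Kgrp_subgroup hom_in_carrier[OF \<phi> \<open>g \<in> carrier (Ggrp p)\<close>]] by blast
    then obtain C where C: "C \<in> level 4" and "\<phi> g = ((0, 0), mat_mult_mod p C (tmat i j))"
      by (auto simp: Kgrp_eq G_mult tG_def embH_def)
    then show ?thesis
      using level4_commute[OF C tmat_closed[OF \<open>(i, j) \<in> upper_pairs\<close>]] by auto
  qed
  obtain C D where "C \<in> level 4" "snd (\<phi> xG) = mat_mult_mod p (tmat 1 3) C"
    and "D \<in> level 4" "snd (\<phi> yG) = mat_mult_mod p (tmat 3 5) D"
    using factor[OF xG_closed _ psi_xG] factor[OF yG_closed _ psi_yG] by (auto simp: upper_pairs_def)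
  moreover have "level 4 \<subseteq> level 3" by (auto simp: level_def in_level_def)
  ultimately show False using no_hom_mapping_to_t13_t35_mod_level3[OF \<phi>] by blast
qed

lemma snd_in_level3_of_commute_mod_Kgrp:
  assumes c: "c \<in> carrier (Ggrp p)"
    and comm: "\<And>h. h \<in> carrier (Ggrp p) \<Longrightarrow> \<exists>b \<in> Kgrp p. c \<otimes>\<^bsub>Ggrp p\<^esub> h = b \<otimes>\<^bsub>Ggrp p\<^esub> (h \<otimes>\<^bsub>Ggrp p\<^esub> c)"
  shows "snd c \<in> level 3"
proof (rule level3_of_commute_mod_level4)
  show "snd c \<in> unitri_carrier p" using c by (auto simp: G_carrier)
  fix M assume "M \<in> unitri_carrier p"
  then obtain b where b: "b \<in> Kgrp p" and eq: "c \<otimes>\<^bsub>Ggrp p\<^esub> embH M = b \<otimes>\<^bsub>Ggrp p\<^esub> (embH M \<otimes>\<^bsub>Ggrp p\<^esub> c)"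
    using comm embH_closed by blast
  have "mat_mult_mod p (snd c) M = mat_mult_mod p (snd b) (mat_mult_mod p M (snd c))"
    using arg_cong[OF eq, of snd] by (simp add: G_mult embH_def)
  moreover have "snd b \<in> level 4" using b by (auto simp: Kgrp_eq)
  ultimately show "\<exists>B\<in>level 4. mat_mult_mod p (snd c) M = mat_mult_mod p B (mat_mult_mod p M (snd c))"
    by blast
qed

lemma twisted_conj_factor_in_level3:
  assumes u: "u \<in> carrier (Ggrp p)" and T: "T \<in> unitri_carrier p"
    and s: "s \<in> carrier (Ggrp p)" and coset: "Kgrp p #>\<^bsub>Ggrp p\<^esub> s = Kgrp p #>\<^bsub>Ggrp p\<^esub> embH T"
    and \<phi>: "\<phi> \<in> hom (Ggrp p) (Ggrp p)"
    and \<beta>: "\<And>h. h \<in> carrier (Ggrp p) \<Longrightarrow> \<beta> h \<in> Kgrp p"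
    and eq: "\<And>h. h \<in> carrier (Ggrp p) \<Longrightarrow>
      u \<otimes>\<^bsub>Ggrp p\<^esub> s \<otimes>\<^bsub>Ggrp p\<^esub> h \<otimes>\<^bsub>Ggrp p\<^esub> inv\<^bsub>Ggrp p\<^esub> s
      = u \<otimes>\<^bsub>Ggrp p\<^esub> \<phi> u \<otimes>\<^bsub>Ggrp p\<^esub> h \<otimes>\<^bsub>Ggrp p\<^esub> inv\<^bsub>Ggrp p\<^esub> (\<phi> u) \<otimes>\<^bsub>Ggrp p\<^esub> \<beta> h"
  shows "\<exists>C \<in> level 3. snd (\<phi> u) = mat_mult_mod p T C"
proof -
  interpret G: group "Ggrp p" by (rule group_G)
  have K: "Kgrp p \<subseteq> carrier (Ggrp p)" by (rule subgroup.subset[OF Kgrp_subgroup])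
  have t: "embH T \<in> carrier (Ggrp p)" by (rule embH_closed[OF T])
  have a: "\<phi> u \<in> carrier (Ggrp p)" by (rule hom_in_carrier[OF \<phi> u])
  obtain k where k: "k \<in> Kgrp p" and sk: "s = k \<otimes>\<^bsub>Ggrp p\<^esub> embH T"
    using G.rcos_eq_imp_mult[OF Kgrp_subgroup s coset] by blast
  define c where "c = inv\<^bsub>Ggrp p\<^esub> (embH T) \<otimes>\<^bsub>Ggrp p\<^esub> \<phi> u"
  have c: "c \<in> carrier (Ggrp p)" using a t by (simp add: c_def)
  have tc: "embH T \<otimes>\<^bsub>Ggrp p\<^esub> c = \<phi> u" using a t by (simp add: c_def G.m_assoc[symmetric])
  have twist: "c \<otimes>\<^bsub>Ggrp p\<^esub> h = inv\<^bsub>Ggrp p\<^esub> (\<beta> h) \<otimes>\<^bsub>Ggrp p\<^esub> (h \<otimes>\<^bsub>Ggrp p\<^esub> c)"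
    if h: "h \<in> carrier (Ggrp p)" for h
  proof (rule G.conj_eq_twisted_conj_imp_commute[OF t c h])
    show "k \<in> carrier (Ggrp p)" "\<beta> h \<in> carrier (Ggrp p)" using k \<beta>[OF h] K by auto
    show "k \<otimes>\<^bsub>Ggrp p\<^esub> x = x \<otimes>\<^bsub>Ggrp p\<^esub> k" "\<beta> h \<otimes>\<^bsub>Ggrp p\<^esub> x = x \<otimes>\<^bsub>Ggrp p\<^esub> \<beta> h"
      if "x \<in> carrier (Ggrp p)" for x
      using Kgrp_central[OF k that] Kgrp_central[OF \<beta>[OF h] that] by auto
    have "s \<otimes>\<^bsub>Ggrp p\<^esub> h \<otimes>\<^bsub>Ggrp p\<^esub> inv\<^bsub>Ggrp p\<^esub> s
        = \<phi> u \<otimes>\<^bsub>Ggrp p\<^esub> h \<otimes>\<^bsub>Ggrp p\<^esub> inv\<^bsub>Ggrp p\<^esub> (\<phi> u) \<otimes>\<^bsub>Ggrp p\<^esub> \<beta> h"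
      using eq[OF h] u s h a \<beta>[OF h] K by (auto simp: G.m_assoc)
    then show "k \<otimes>\<^bsub>Ggrp p\<^esub> embH T \<otimes>\<^bsub>Ggrp p\<^esub> h \<otimes>\<^bsub>Ggrp p\<^esub> inv\<^bsub>Ggrp p\<^esub> (k \<otimes>\<^bsub>Ggrp p\<^esub> embH T)
        = embH T \<otimes>\<^bsub>Ggrp p\<^esub> c \<otimes>\<^bsub>Ggrp p\<^esub> h \<otimes>\<^bsub>Ggrp p\<^esub> inv\<^bsub>Ggrp p\<^esub> (embH T \<otimes>\<^bsub>Ggrp p\<^esub> c)
          \<otimes>\<^bsub>Ggrp p\<^esub> \<beta> h"
      by (simp add: sk tc)
  qed
  have "snd c \<in> level 3"
  proof (rule snd_in_level3_of_commute_mod_Kgrp[OF c])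
    fix h assume h: "h \<in> carrier (Ggrp p)"
    show "\<exists>b \<in> Kgrp p. c \<otimes>\<^bsub>Ggrp p\<^esub> h = b \<otimes>\<^bsub>Ggrp p\<^esub> (h \<otimes>\<^bsub>Ggrp p\<^esub> c)"
      using twist[OF h] subgroup.m_inv_closed[OF Kgrp_subgroup \<beta>[OF h]] by blast
  qed
  moreover have "snd (\<phi> u) = mat_mult_mod p T (snd c)"
    using arg_cong[OF tc, of snd] by (simp add: G_mult embH_def)
  ultimately show ?thesis by blast
qed

lemma psi_no_twisted_lift:
  assumes lift: "\<forall>g \<in> carrier (Ggrp p). \<psi>u g \<in> Agrp p \<and>
      Kgrp p #>\<^bsub>Ggrp p\<^esub> \<psi>u g = psi (Kgrp p #>\<^bsub>Ggrp p\<^esub> g)"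
  shows "\<not> (\<exists>\<phi> \<alpha>. \<phi> \<in> hom (Ggrp p) (Ggrp p) \<and> bilinear_on (Ggrp p) (Kgrp p) \<alpha> \<and>
      (\<forall>g \<in> carrier (Ggrp p). \<forall>h \<in> carrier (Ggrp p).
        g \<otimes>\<^bsub>Ggrp p\<^esub> \<psi>u g \<otimes>\<^bsub>Ggrp p\<^esub> h \<otimes>\<^bsub>Ggrp p\<^esub> inv\<^bsub>Ggrp p\<^esub> (\<psi>u g)
        = g \<otimes>\<^bsub>Ggrp p\<^esub> \<phi> g \<otimes>\<^bsub>Ggrp p\<^esub> h \<otimes>\<^bsub>Ggrp p\<^esub> inv\<^bsub>Ggrp p\<^esub> (\<phi> g) \<otimes>\<^bsub>Ggrp p\<^esub> \<alpha> g h))"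
proof
  assume "\<exists>\<phi> \<alpha>. \<phi> \<in> hom (Ggrp p) (Ggrp p) \<and> bilinear_on (Ggrp p) (Kgrp p) \<alpha> \<and>
      (\<forall>g \<in> carrier (Ggrp p). \<forall>h \<in> carrier (Ggrp p).
        g \<otimes>\<^bsub>Ggrp p\<^esub> \<psi>u g \<otimes>\<^bsub>Ggrp p\<^esub> h \<otimes>\<^bsub>Ggrp p\<^esub> inv\<^bsub>Ggrp p\<^esub> (\<psi>u g)
        = g \<otimes>\<^bsub>Ggrp p\<^esub> \<phi> g \<otimes>\<^bsub>Ggrp p\<^esub> h \<otimes>\<^bsub>Ggrp p\<^esub> inv\<^bsub>Ggrp p\<^esub> (\<phi> g) \<otimes>\<^bsub>Ggrp p\<^esub> \<alpha> g h)"
  then obtain \<phi> \<alpha> where \<phi>: "\<phi> \<in> hom (Ggrp p) (Ggrp p)" and "bilinear_on (Ggrp p) (Kgrp p) \<alpha>"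
    and eq: "\<forall>g \<in> carrier (Ggrp p). \<forall>h \<in> carrier (Ggrp p).
        g \<otimes>\<^bsub>Ggrp p\<^esub> \<psi>u g \<otimes>\<^bsub>Ggrp p\<^esub> h \<otimes>\<^bsub>Ggrp p\<^esub> inv\<^bsub>Ggrp p\<^esub> (\<psi>u g)
        = g \<otimes>\<^bsub>Ggrp p\<^esub> \<phi> g \<otimes>\<^bsub>Ggrp p\<^esub> h \<otimes>\<^bsub>Ggrp p\<^esub> inv\<^bsub>Ggrp p\<^esub> (\<phi> g) \<otimes>\<^bsub>Ggrp p\<^esub> \<alpha> g h"
    by blast
  \<comment> \<open>Of bilinearity only the fact that \<open>\<alpha>\<close> takes values in \<open>K\<close> is needed.\<close>
  then have \<alpha>: "\<And>g h. g \<in> carrier (Ggrp p) \<Longrightarrow> h \<in> carrier (Ggrp p) \<Longrightarrow> \<alpha> g h \<in> Kgrp p"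
    by (simp add: bilinear_on_def)
  have factor: "\<exists>C \<in> level 3. snd (\<phi> g) = mat_mult_mod p (tmat i j) C"
    if "g \<in> carrier (Ggrp p)" and "(i, j) \<in> upper_pairs"
      and "psi (Kgrp p #>\<^bsub>Ggrp p\<^esub> g) = Kgrp p #>\<^bsub>Ggrp p\<^esub> tG i j" for g i j
  proof (rule twisted_conj_factor_in_level3[where \<beta> = "\<alpha> g", OF that(1) tmat_closed[OF that(2)] _ _ \<phi> \<alpha>[OF that(1)]])
    show "\<psi>u g \<in> carrier (Ggrp p)" using lift that(1) subgroup.subset[OF Agrp_subgroup] by blast
    show "Kgrp p #>\<^bsub>Ggrp p\<^esub> \<psi>u g = Kgrp p #>\<^bsub>Ggrp p\<^esub> embH (tmat i j)"
      using lift that by (simp add: tG_def)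
  qed (use eq that(1) in auto)
  obtain C D where "C \<in> level 3" "snd (\<phi> xG) = mat_mult_mod p (tmat 1 3) C"
    and "D \<in> level 3" "snd (\<phi> yG) = mat_mult_mod p (tmat 3 5) D"
    using factor[OF xG_closed _ psi_xG] factor[OF yG_closed _ psi_yG] by (auto simp: upper_pairs_def)
  then show False using no_hom_mapping_to_t13_t35_mod_level3[OF \<phi>] by blast
qed

end

theorem mainTheorem11:
  fixes p :: nat
  assumes "Factorial_Ring.prime p" and "p \<ge> 5"
  defines "G \<equiv> Ggrp p" and "K \<equiv> Kgrp p" and "A \<equiv> Agrp p"
  defines "IsPsi \<equiv> (\<lambda>\<psi>. \<psi> \<in> hom (G Mod K) (G Mod K)
              \<and> \<psi> \<in> extensional (carrier (G Mod K))
              \<and> \<psi> (K #>\<^bsub>G\<^esub> xG) = K #>\<^bsub>G\<^esub> tG 1 3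
              \<and> \<psi> (K #>\<^bsub>G\<^esub> yG) = K #>\<^bsub>G\<^esub> tG 3 5
              \<and> (\<forall>i j. 1 \<le> i \<and> i < j \<and> j \<le> 5 \<longrightarrow> \<psi> (K #>\<^bsub>G\<^esub> tG i j) = K))"
  shows "K = embH ` generate (UT5 p) {tmat 1 5}
    \<and> K \<subseteq> center_of G
    \<and> comm_group ((G\<lparr>carrier := A\<rparr>) Mod K)
    \<and> \<not> comm_group (G\<lparr>carrier := A\<rparr>)
    \<and> (\<exists>!\<psi>. IsPsi \<psi>)
    \<and> (\<forall>\<psi>. IsPsi \<psi> \<longrightarrow>
         \<psi> ` carrier (G Mod K) \<subseteq> {K #>\<^bsub>G\<^esub> a | a. a \<in> A}
       \<and> \<not> (\<exists>\<phi> \<in> hom G G. \<forall>g \<in> carrier G. \<psi> (K #>\<^bsub>G\<^esub> g) = K #>\<^bsub>G\<^esub> \<phi> g)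
       \<and> (\<forall>\<psi>u. (\<forall>g \<in> carrier G. \<psi>u g \<in> A \<and> K #>\<^bsub>G\<^esub> \<psi>u g = \<psi> (K #>\<^bsub>G\<^esub> g)) \<longrightarrow>
            \<not> (\<exists>\<phi> \<alpha>. \<phi> \<in> hom G G \<and> bilinear_on G K \<alpha> \<and>
                 (\<forall>g \<in> carrier G. \<forall>h \<in> carrier G.
                    g \<otimes>\<^bsub>G\<^esub> \<psi>u g \<otimes>\<^bsub>G\<^esub> h \<otimes>\<^bsub>G\<^esub> inv\<^bsub>G\<^esub> (\<psi>u g)
                  = g \<otimes>\<^bsub>G\<^esub> \<phi> g \<otimes>\<^bsub>G\<^esub> h \<otimes>\<^bsub>G\<^esub> inv\<^bsub>G\<^esub> (\<phi> g) \<otimes>\<^bsub>G\<^esub> \<alpha> g h))))"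
proof -
  interpret unitri5 p using assms(2) by unfold_locales simp
  have IsPsi_iff: "IsPsi \<psi> \<longleftrightarrow> \<psi> = psi" for \<psi>
    unfolding IsPsi_def G_def K_def
    using psi_unique[of \<psi>] psi_hom psi_extensional psi_xG psi_yG psi_tG by (auto simp: upper_pairs_iff)
  have "Kgrp p = embH ` generate (UT5 p) {tmat 1 5}"
    by (simp add: Kgrp_def gamma4_eq_generate)
  then show ?thesis
    unfolding IsPsi_iff G_def K_def A_def
    using Kgrp_subset_center comm_group_Agrp_Mod_Kgrp not_comm_group_Agrp
      psi_image_subset psi_not_induced psi_no_twisted_lift
    by simp
qed

end
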